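(* Let $n=2$ and let $(X,\mathbf h,\Lambda,\widetilde B)$ be a quantum seed, with $X'_2$ the second cluster variable of $\mu_2(X,\mathbf h,\Lambda,\widetilde B)$. Then $$\mathbb{ZP}[X_1,X_2^{\pm1}]\cap\mathbb{ZP}[X_1^{\pm1},X_2,X'_2]=\mathbb{ZP}[X_1,X_2,X'_2].$$
   Context: Notation: $[a,b]=\{a,a+1,\dots,b\}$; $[x]_+=\max(x,0)$, applied entrywise to vectors; $e_1,\dots,e_m$ is the standard basis of $\mathbb Z^m$. Fix integers $m\ge n\ge 1$. A compatible pair $(\Lambda,\widetilde B)$ consists of an $m\times n$ integer matrix $\widetilde B=(b_{kl})$ and a skew-symmetric $m\times m$ integer matrix $\Lambda$ such that $\Lambda\widetilde B=-\begin{bmatrix}D\\0\end{bmatrix}$ for some $D=\mathrm{diag}(\tilde d_1,\dots,\tilde d_n)$ with all $\tilde d_k\in\mathbb Z_{>0}$. Write $\Lambda(a,b)=a^T\Lambda b$. Fix positive integers $d_1,\dots,d_n$ such that $d_k$ divides every entry of the $k$-th column $b^k$ of $\widetilde B$; $\beta^k=\frac1{d_k}b^k$. The quantum torus $\mathcal T(\Lambda)$ is the $\mathbb Z[q^{\pm1/2}]$-algebra with basis $\{X(c)\mid c\in\mathbb Z^m\}$ and multiplication $X(c)X(d)=q^{\frac12\Lambda(c,d)}X(c+d)$; $\mathcal F$ is its skew field of fractions, $X_k=X(e_k)$. For $k\in[1,n]$, $\mathbf h_k=(h_{k,0},\dots,h_{k,d_k})$ with $h_{k,r}\in\mathbb Z[q^{\pm1/2}]$,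 $h_{k,r}=h_{k,d_k-r}$, $h_{k,0}=h_{k,d_k}=1$. A quantum seed $(X,\mathbf h,\Lambda,\widetilde B)$ consists of these data and the map $X:c\mapsto X(c)$. Its mutation in direction $i$ has cluster variables $X'_k=X_k$ for $k\ne i$ and $X'_i=\sum_{r=0}^{d_i}h_{i,r}X(r[\beta^i]_++(d_i-r)[-\beta^i]_+-e_i)$. $\mathbb{ZP}$ is the ring of Laurent polynomials in $X_{n+1},\dots,X_m$ with coefficients in $\mathbb Z[q^{\pm1/2}]$; for $Y_1,\dots,Y_s\in\mathcal F$, $\mathbb{ZP}[Y_1,\dots,Y_s]$ is the subring of $\mathcal F$ generated by $\mathbb{ZP}$ and the $Y_k$ (exponent $\pm1$ means both $Y$ and $Y^{-1}$ are adjoined). *)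

theory Defs
  imports "HOL-Algebra.Generated_Rings"
begin

text \<open>
  Indices run over 1..m.  Integer vectors c in Z^m are functions
  nat => int vanishing outside [1,m].
  We write t = q^(1/2); an element of Z[q^(+-1/2)] is a finitely supported
  function int => int (coefficient of t^j).  An element of the quantum torus
  T(Lambda) is a finitely supported function (int * (nat => int)) => int,
  the value at (j, c) being the coefficient of q^(j/2) X(c).
\<close>

definition zvec :: "nat \<Rightarrow> (nat \<Rightarrow> int) set" where
  "zvec m = {c. \<forall>k. k \<notin> {1..m} \<longrightarrow> c k = 0}"

definition ebasis :: "nat \<Rightarrow> nat \<Rightarrow> int" where
  "ebasis i = (\<lambda>k. if k = i then 1 else 0)"

definition posp :: "(nat \<Rightarrow> int) \<Rightarrow> nat \<Rightarrow> int" where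
  "posp v = (\<lambda>k. max (v k) 0)"

definition bil :: "nat \<Rightarrow> (nat \<Rightarrow> nat \<Rightarrow> int) \<Rightarrow> (nat \<Rightarrow> int) \<Rightarrow> (nat \<Rightarrow> int) \<Rightarrow> int" where
  "bil m L c d = (\<Sum>k\<in>{1..m}. \<Sum>l\<in>{1..m}. c k * L k l * d l)"

definition skew_sym :: "nat \<Rightarrow> (nat \<Rightarrow> nat \<Rightarrow> int) \<Rightarrow> bool" where
  "skew_sym m L \<longleftrightarrow> (\<forall>k\<in>{1..m}. \<forall>l\<in>{1..m}. L k l = - L l k)"

definition compatible_pair ::
  "nat \<Rightarrow> nat \<Rightarrow> (nat \<Rightarrow> nat \<Rightarrow> int) \<Rightarrow> (nat \<Rightarrow> nat \<Rightarrow> int) \<Rightarrow> bool" where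
  "compatible_pair m n L B \<longleftrightarrow> skew_sym m L \<and>
     (\<exists>D :: nat \<Rightarrow> int. (\<forall>k\<in>{1..n}. D k > 0) \<and>
        (\<forall>k\<in>{1..m}. \<forall>l\<in>{1..n}.
           (\<Sum>j\<in>{1..m}. L k j * B j l) = (if k = l then - D k else 0)))"

definition qt_carrier :: "nat \<Rightarrow> ((int \<times> (nat \<Rightarrow> int)) \<Rightarrow> int) set" where
  "qt_carrier m = {f. finite {p. f p \<noteq> 0} \<and> (\<forall>j c. f (j, c) \<noteq> 0 \<longrightarrow> c \<in> zvec m)}"

definition qt_mult :: "nat \<Rightarrow> (nat \<Rightarrow> nat \<Rightarrow> int) \<Rightarrow>
    ((int \<times> (nat \<Rightarrow> int)) \<Rightarrow> int) \<Rightarrow> ((int \<times> (nat \<Rightarrow> int)) \<Rightarrow> int) \<Rightarrow>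
    ((int \<times> (nat \<Rightarrow> int)) \<Rightarrow> int)" where
  "qt_mult m L f g = (\<lambda>(j, c).
     \<Sum>(p, p') \<in> {p. f p \<noteq> 0} \<times> {p. g p \<noteq> 0}.
        if fst p + fst p' + bil m L (snd p) (snd p') = j \<and> (\<lambda>k. snd p k + snd p' k) = c
        then f p * g p' else 0)"

definition quantum_torus :: "nat \<Rightarrow> (nat \<Rightarrow> nat \<Rightarrow> int) \<Rightarrow>
    ((int \<times> (nat \<Rightarrow> int)) \<Rightarrow> int) ring" where
  "quantum_torus m L = \<lparr> carrier = qt_carrier m,
      mult = qt_mult m L,
      one = (\<lambda>(j, c). if j = 0 \<and> c = (\<lambda>_. 0) then 1 else 0),
      zero = (\<lambda>_. 0),
      add = (\<lambda>f g p. f p + g p) \<rparr>"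

definition qX :: "(nat \<Rightarrow> int) \<Rightarrow> ((int \<times> (nat \<Rightarrow> int)) \<Rightarrow> int)" where
  "qX c = (\<lambda>(j, c'). if j = 0 \<and> c' = c then 1 else 0)"

text \<open>The ring ZP: Laurent polynomials in X_{n+1},...,X_m over Z[q^(+-1/2)].\<close>
definition ZP :: "nat \<Rightarrow> nat \<Rightarrow> ((int \<times> (nat \<Rightarrow> int)) \<Rightarrow> int) set" where
  "ZP m n = {f \<in> qt_carrier m. \<forall>j c. f (j, c) \<noteq> 0 \<longrightarrow> (\<forall>k\<in>{1..n}. c k = 0)}"

text \<open>ZP[Y_1,...,Y_s]: subring generated by ZP and the Y's (inside T(Lambda),
  which is a subring of its skew field of fractions).\<close>
definition ZP_adj :: "nat \<Rightarrow> nat \<Rightarrow> (nat \<Rightarrow> nat \<Rightarrow> int) \<Rightarrow>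
    ((int \<times> (nat \<Rightarrow> int)) \<Rightarrow> int) set \<Rightarrow> ((int \<times> (nat \<Rightarrow> int)) \<Rightarrow> int) set" where
  "ZP_adj m n L Ys = generate_ring (quantum_torus m L) (ZP m n \<union> Ys)"

text \<open>Data h: h k r is the element h_{k,r} of Z[q^(+-1/2)].\<close>
definition valid_h :: "nat \<Rightarrow> (nat \<Rightarrow> nat) \<Rightarrow> (nat \<Rightarrow> nat \<Rightarrow> int \<Rightarrow> int) \<Rightarrow> bool" where
  "valid_h n d h \<longleftrightarrow> (\<forall>k\<in>{1..n}.
      (\<forall>r\<in>{0..d k}. finite {j. h k r j \<noteq> 0}) \<and>
      (\<forall>r\<in>{0..d k}. h k r = h k (d k - r)) \<and>
      h k 0 = (\<lambda>j. if j = 0 then 1 else 0) \<and>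
      h k (d k) = (\<lambda>j. if j = 0 then 1 else 0))"

text \<open>Quantum seed (X, h, Lambda, B) with n exchangeable indices (X is the
  standard map c |-> X(c) of T(Lambda)); d_k divides column k of B.\<close>
definition quantum_seed ::
  "nat \<Rightarrow> nat \<Rightarrow> (nat \<Rightarrow> nat \<Rightarrow> int) \<Rightarrow> (nat \<Rightarrow> nat \<Rightarrow> int) \<Rightarrow>
   (nat \<Rightarrow> nat) \<Rightarrow> (nat \<Rightarrow> nat \<Rightarrow> int \<Rightarrow> int) \<Rightarrow> bool" where
  "quantum_seed m n L B d h \<longleftrightarrow> 1 \<le> n \<and> n \<le> m \<and> compatible_pair m n L B \<and>
     (\<forall>k\<in>{1..n}. d k > 0 \<and> (\<forall>j\<in>{1..m}. int (d k) dvd B j k)) \<and>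
     valid_h n d h"

definition beta :: "nat \<Rightarrow> (nat \<Rightarrow> nat \<Rightarrow> int) \<Rightarrow> (nat \<Rightarrow> nat) \<Rightarrow> nat \<Rightarrow> nat \<Rightarrow> int" where
  "beta m B d i = (\<lambda>k. if k \<in> {1..m} then B k i div int (d i) else 0)"

text \<open>The new cluster variable X'_i of the mutation mu_i:
  sum_{r=0}^{d_i} h_{i,r} X(r[beta^i]_+ + (d_i - r)[-beta^i]_+ - e_i).\<close>
definition mut_var :: "nat \<Rightarrow> (nat \<Rightarrow> nat \<Rightarrow> int) \<Rightarrow> (nat \<Rightarrow> nat) \<Rightarrow>
    (nat \<Rightarrow> nat \<Rightarrow> int \<Rightarrow> int) \<Rightarrow> nat \<Rightarrow> ((int \<times> (nat \<Rightarrow> int)) \<Rightarrow> int)" where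
  "mut_var m B d h i = (\<lambda>(j, c). \<Sum>r\<in>{0..d i}.
      if c = (\<lambda>k. int r * posp (beta m B d i) k
                 + int (d i - r) * posp (\<lambda>l. - beta m B d i l) k - ebasis i k)
      then h i r j else 0)"

end

(*
  Let A = ZP[X1, X2^(+-1)], B = ZP[X1^(+-1), X2, Y] and R = ZP[X1, X2, Y], where Y = X'_2.
  All monomials of Y have non-negative X1-degree, so Y lies in A and R lies in A and in B.

  Conversely, let T0 consist of the elements of X2-degree 0. The exponents of Y differ by
  multiples of beta = beta^2, and compatibility gives Lambda(c, beta) = 0 whenever c_2 = 0; hence
  X2 and Y commute with T0 up to rescaling monomials by powers of q, and every element of B is a
  sum of terms a X2^b and a Y^(k+1) with a in T0. Split an element y of A and B by X2-degree.
  A part of degree b >= 0 has only monomials X1^a X2^b with a >= 0 and lies in R. A part of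
  degree -(k+1) is a Y^(k+1) with a in T0. Since Y has a lowest monomial (with respect to an entry i with
  beta_i /= 0) free of X1, the lexicographically lowest monomial of a survives in a Y^(k+1). So a
  has no negative powers of X1 either, and a and the part lie in R.
*)

theory Submission
  imports Defs "HOL-Library.Function_Algebras" "HOL-Library.Product_Lexorder"
begin

section \<open>The quantum torus as a ring\<close>

type_synonym qt_elem = "int \<times> (nat \<Rightarrow> int) \<Rightarrow> int"

definition supp :: "qt_elem \<Rightarrow> (int \<times> (nat \<Rightarrow> int)) set" where
  "supp f = {p. f p \<noteq> 0}"

definition basis_mult :: "nat \<Rightarrow> (nat \<Rightarrow> nat \<Rightarrow> int) \<Rightarrow>
    int \<times> (nat \<Rightarrow> int) \<Rightarrow> int \<times> (nat \<Rightarrow> int) \<Rightarrow> int \<times> (nat \<Rightarrow> int)" where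
  "basis_mult m L p q = (fst p + fst q + bil m L (snd p) (snd q), snd p + snd q)"

lemma bil_add_left: "bil m L (a + b) c = bil m L a c + bil m L b c"
  by (simp add: bil_def distrib_right sum.distrib)

lemma bil_add_right: "bil m L a (b + c) = bil m L a b + bil m L a c"
  by (simp add: bil_def distrib_left sum.distrib)

lemma bil_scale_left: "bil m L (\<lambda>k. i * c k) a = i * bil m L c a"
  by (simp add: bil_def sum_distrib_left algebra_simps)

lemma bil_scale_right: "bil m L a (\<lambda>k. i * c k) = i * bil m L a c"
  by (simp add: bil_def sum_distrib_left algebra_simps)

lemma bil_uminus_left: "bil m L (- a) c = - bil m L a c"
  by (simp add: bil_def sum_negf)

lemma bil_zero_left [simp]: "bil m L 0 c = 0"
  and bil_zero_right [simp]: "bil m L c 0 = 0"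
  by (simp_all add: bil_def)

lemma bil_skew:
  assumes "skew_sym m L"
  shows "bil m L a b = - bil m L b a"
proof -
  have "bil m L a b = (\<Sum>l\<in>{1..m}. \<Sum>k\<in>{1..m}. a k * L k l * b l)"
    unfolding bil_def by (rule sum.swap)
  also have "\<dots> = (\<Sum>l\<in>{1..m}. \<Sum>k\<in>{1..m}. - (b l * L l k * a k))"
  proof (intro sum.cong refl)
    fix l k assume "l \<in> {1..m}" "k \<in> {1..m}"
    then have "L k l = - L l k" using assms unfolding skew_sym_def by blast
    then show "a k * L k l * b l = - (b l * L l k * a k)" by simp
  qed
  also have "\<dots> = - bil m L b a"
    by (simp add: bil_def sum_negf)
  finally show ?thesis .
qed

lemma bil_self: "skew_sym m L \<Longrightarrow> bil m L a a = 0"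
  using bil_skew[of m L a a] by simp

lemma basis_mult_assoc:
  "basis_mult m L (basis_mult m L p q) r = basis_mult m L p (basis_mult m L q r)"
  by (simp add: basis_mult_def bil_add_left bil_add_right algebra_simps)

lemma qt_carrier_finite_supp: "f \<in> qt_carrier m \<Longrightarrow> finite (supp f)"
  by (simp add: qt_carrier_def supp_def)

lemma qt_carrier_exponent: "f \<in> qt_carrier m \<Longrightarrow> f p \<noteq> 0 \<Longrightarrow> snd p \<in> zvec m"
  by (cases p) (simp add: qt_carrier_def)

lemma qt_carrierI:
  assumes "finite (supp f)" and "\<And>j c. f (j, c) \<noteq> 0 \<Longrightarrow> c \<in> zvec m"
  shows "f \<in> qt_carrier m"
  using assms by (simp add: qt_carrier_def supp_def)

lemma qt_carrier_subset:
  assumes "g \<in> qt_carrier m" and "\<And>p. f p \<noteq> 0 \<Longrightarrow> g p \<noteq> 0"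
  shows "f \<in> qt_carrier m"
proof (rule qt_carrierI)
  show "finite (supp f)"
    using assms by (intro finite_subset[OF _ qt_carrier_finite_supp]) (auto simp: supp_def)
qed (use assms in \<open>auto simp: qt_carrier_def\<close>)

lemma qt_mult_expand:
  assumes "finite A" "finite B" "supp f \<subseteq> A" "supp g \<subseteq> B"
  shows "qt_mult m L f g x =
    (\<Sum>p\<in>A. \<Sum>q\<in>B. if basis_mult m L p q = x then f p * g q else 0)"
proof -
  obtain j c where x: "x = (j, c)" by fastforce
  have "(fst p + fst q + bil m L (snd p) (snd q) = j \<and> (\<lambda>k. snd p k + snd q k) = c)
      = (basis_mult m L p q = x)" for p q
    by (auto simp: basis_mult_def x plus_fun_def)
  then have "qt_mult m L f g x =
      (\<Sum>(p, q)\<in>supp f \<times> supp g. if basis_mult m L p q = x then f p * g q else 0)"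
    unfolding qt_mult_def x supp_def split_def by (simp only: prod.case fst_conv snd_conv)
  also have "\<dots> = (\<Sum>(p, q)\<in>A \<times> B. if basis_mult m L p q = x then f p * g q else 0)"
    using assms by (intro sum.mono_neutral_left) (auto simp: supp_def split: if_splits)
  also have "\<dots> = (\<Sum>p\<in>A. \<Sum>q\<in>B. if basis_mult m L p q = x then f p * g q else 0)"
    by (rule sum.cartesian_product[symmetric])
  finally show ?thesis .
qed

lemma qt_mult_nonzeroE:
  assumes "f \<in> qt_carrier m" "g \<in> qt_carrier m" "qt_mult m L f g x \<noteq> 0"
  obtains p q where "f p \<noteq> 0" "g q \<noteq> 0" "basis_mult m L p q = x"
proof -
  have "(\<Sum>p\<in>supp f. \<Sum>q\<in>supp g. if basis_mult m L p q = x then f p * g q else 0) \<noteq> 0"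
    using assms(3) qt_mult_expand[OF qt_carrier_finite_supp[OF assms(1)]
        qt_carrier_finite_supp[OF assms(2)] order_refl order_refl] by simp
  then obtain p where "p \<in> supp f"
      "(\<Sum>q\<in>supp g. if basis_mult m L p q = x then f p * g q else 0) \<noteq> 0"
    by (rule sum.not_neutral_contains_not_neutral)
  moreover from this(2) obtain q where
      "q \<in> supp g" "(if basis_mult m L p q = x then f p * g q else 0) \<noteq> 0"
    by (rule sum.not_neutral_contains_not_neutral)
  ultimately show thesis
    by (intro that[of p q]) (auto simp: supp_def split: if_splits)
qed

lemma supp_qt_mult:
  assumes "f \<in> qt_carrier m" "g \<in> qt_carrier m"
  shows "supp (qt_mult m L f g) \<subseteq> (\<lambda>(p, q). basis_mult m L p q) ` (supp f \<times> supp g)"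
proof
  fix x assume "x \<in> supp (qt_mult m L f g)"
  then have "qt_mult m L f g x \<noteq> 0" by (simp add: supp_def)
  then obtain p q where "f p \<noteq> 0" "g q \<noteq> 0" "basis_mult m L p q = x"
    by (rule qt_mult_nonzeroE[OF assms])
  then show "x \<in> (\<lambda>(p, q). basis_mult m L p q) ` (supp f \<times> supp g)"
    by (force simp: supp_def)
qed

lemma qt_mult_closed:
  assumes f: "f \<in> qt_carrier m" and g: "g \<in> qt_carrier m"
  shows "qt_mult m L f g \<in> qt_carrier m"
proof (rule qt_carrierI)
  show "finite (supp (qt_mult m L f g))"
    using f g by (intro finite_subset[OF supp_qt_mult[OF f g]]) (simp add: qt_carrier_finite_supp)
next
  fix j c assume "qt_mult m L f g (j, c) \<noteq> 0"
  then obtain p q where "f p \<noteq> 0" "g q \<noteq> 0" "basis_mult m L p q = (j, c)"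
    using qt_mult_nonzeroE[OF f g] by blast
  moreover have "snd p \<in> zvec m" "snd q \<in> zvec m"
    using f g \<open>f p \<noteq> 0\<close> \<open>g q \<noteq> 0\<close> by (simp_all add: qt_carrier_exponent)
  ultimately show "c \<in> zvec m"
    by (auto simp: basis_mult_def zvec_def)
qed

lemma sum_reorder4:
  "(\<Sum>s\<in>S. \<Sum>r\<in>R. \<Sum>p\<in>P. \<Sum>q\<in>Q. F s r p q) = (\<Sum>p\<in>P. \<Sum>q\<in>Q. \<Sum>r\<in>R. \<Sum>s\<in>S. F s r p q)"
proof -
  have "(\<Sum>s\<in>S. \<Sum>r\<in>R. \<Sum>p\<in>P. \<Sum>q\<in>Q. F s r p q) = (\<Sum>s\<in>S. \<Sum>p\<in>P. \<Sum>q\<in>Q. \<Sum>r\<in>R. F s r p q)"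
    by (rule sum.cong[OF refl], rule trans[OF sum.swap], rule sum.cong[OF refl], rule sum.swap)
  also have "\<dots> = (\<Sum>p\<in>P. \<Sum>q\<in>Q. \<Sum>s\<in>S. \<Sum>r\<in>R. F s r p q)"
    by (rule trans[OF sum.swap], intro sum.cong refl, rule sum.swap)
  also have "\<dots> = (\<Sum>p\<in>P. \<Sum>q\<in>Q. \<Sum>r\<in>R. \<Sum>s\<in>S. F s r p q)"
    by (rule sum.cong[OF refl], rule sum.cong[OF refl], rule sum.swap)
  finally show ?thesis .
qed

lemma sum_delta_conj:
  assumes "finite S" "a \<in> S"
  shows "(\<Sum>s\<in>S. if a = s \<and> P s then G s else 0) = (if P a then G a else (0::'b::comm_monoid_add))"
proof -
  have "(\<Sum>s\<in>S. if a = s \<and> P s then G s else 0) = (\<Sum>s\<in>S. if a = s then if P s then G s else 0 else 0)"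
    by (intro sum.cong) auto
  then show ?thesis
    using assms by (simp add: sum.delta)
qed

lemma qt_mult_expand_assoc_left:
  assumes f: "f \<in> qt_carrier m" and g: "g \<in> qt_carrier m" and h: "h \<in> qt_carrier m"
  shows "qt_mult m L (qt_mult m L f g) h x = (\<Sum>p\<in>supp f. \<Sum>q\<in>supp g. \<Sum>r\<in>supp h.
           if basis_mult m L (basis_mult m L p q) r = x then f p * g q * h r else 0)"
proof -
  define AB where "AB = (\<lambda>(p, q). basis_mult m L p q) ` (supp f \<times> supp g)"
  have fin: "finite (supp f)" "finite (supp g)" "finite (supp h)" "finite AB"
    using f g h by (simp_all add: AB_def qt_carrier_finite_supp)
  have "qt_mult m L (qt_mult m L f g) h x
      = (\<Sum>s\<in>AB. \<Sum>r\<in>supp h. if basis_mult m L s r = x then qt_mult m L f g s * h r else 0)"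
    using fin supp_qt_mult[OF f g] by (intro qt_mult_expand) (simp_all add: AB_def)
  also have "\<dots> = (\<Sum>s\<in>AB. \<Sum>r\<in>supp h. \<Sum>p\<in>supp f. \<Sum>q\<in>supp g.
        if basis_mult m L p q = s \<and> basis_mult m L s r = x then f p * g q * h r else 0)"
    using fin by (intro sum.cong refl) (auto simp: qt_mult_expand sum_distrib_right intro!: sum.cong)
  also have "\<dots> = (\<Sum>p\<in>supp f. \<Sum>q\<in>supp g. \<Sum>r\<in>supp h. \<Sum>s\<in>AB.
        if basis_mult m L p q = s \<and> basis_mult m L s r = x then f p * g q * h r else 0)"
    by (rule sum_reorder4)
  also have "\<dots> = (\<Sum>p\<in>supp f. \<Sum>q\<in>supp g. \<Sum>r\<in>supp h.
        if basis_mult m L (basis_mult m L p q) r = x then f p * g q * h r else 0)"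
    using fin(4) by (intro sum.cong refl sum_delta_conj) (auto simp: AB_def)
  finally show ?thesis .
qed

lemma qt_mult_expand_assoc_right:
  assumes f: "f \<in> qt_carrier m" and g: "g \<in> qt_carrier m" and h: "h \<in> qt_carrier m"
  shows "qt_mult m L f (qt_mult m L g h) x = (\<Sum>p\<in>supp f. \<Sum>q\<in>supp g. \<Sum>r\<in>supp h.
           if basis_mult m L p (basis_mult m L q r) = x then f p * g q * h r else 0)"
proof -
  define BC where "BC = (\<lambda>(p, q). basis_mult m L p q) ` (supp g \<times> supp h)"
  have fin: "finite (supp f)" "finite (supp g)" "finite (supp h)" "finite BC"
    using f g h by (simp_all add: BC_def qt_carrier_finite_supp)
  have "qt_mult m L f (qt_mult m L g h) x
      = (\<Sum>p\<in>supp f. \<Sum>t\<in>BC. if basis_mult m L p t = x then f p * qt_mult m L g h t else 0)"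
    using fin supp_qt_mult[OF g h] by (intro qt_mult_expand) (simp_all add: BC_def)
  also have "\<dots> = (\<Sum>p\<in>supp f. \<Sum>t\<in>BC. \<Sum>q\<in>supp g. \<Sum>r\<in>supp h.
        if basis_mult m L q r = t \<and> basis_mult m L p t = x then f p * g q * h r else 0)"
    using fin by (intro sum.cong refl) (auto simp: qt_mult_expand sum_distrib_left mult.assoc intro!: sum.cong)
  also have "\<dots> = (\<Sum>p\<in>supp f. \<Sum>q\<in>supp g. \<Sum>r\<in>supp h. \<Sum>t\<in>BC.
        if basis_mult m L q r = t \<and> basis_mult m L p t = x then f p * g q * h r else 0)"
    by (rule sum.cong[OF refl], rule trans[OF sum.swap], rule sum.cong[OF refl], rule sum.swap)
  also have "\<dots> = (\<Sum>p\<in>supp f. \<Sum>q\<in>supp g. \<Sum>r\<in>supp h.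
        if basis_mult m L p (basis_mult m L q r) = x then f p * g q * h r else 0)"
    using fin(4) by (intro sum.cong refl sum_delta_conj) (auto simp: BC_def)
  finally show ?thesis .
qed

lemma qt_mult_assoc:
  assumes "f \<in> qt_carrier m" "g \<in> qt_carrier m" "h \<in> qt_carrier m"
  shows "qt_mult m L (qt_mult m L f g) h = qt_mult m L f (qt_mult m L g h)"
  by (rule ext) (simp only: qt_mult_expand_assoc_left[OF assms] qt_mult_expand_assoc_right[OF assms]
      basis_mult_assoc)

definition qone :: qt_elem where
  "qone = (\<lambda>(j, c). if j = 0 \<and> c = 0 then 1 else 0)"

definition qt_monom :: "int \<Rightarrow> (nat \<Rightarrow> int) \<Rightarrow> qt_elem" where
  "qt_monom j c = (\<lambda>(j', c'). if j' = j \<and> c' = c then 1 else 0)"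

lemma qX_eq_monom: "qX c = qt_monom 0 c"
  by (simp add: qX_def qt_monom_def)

lemma qone_eq_monom: "qone = qt_monom 0 0"
  by (simp add: qone_def qt_monom_def)

lemma supp_qt_monom: "supp (qt_monom j c) = {(j, c)}"
  by (auto simp: supp_def qt_monom_def split: if_splits)

lemma qt_monom_carrier: "c \<in> zvec m \<Longrightarrow> qt_monom j c \<in> qt_carrier m"
  by (rule qt_carrierI) (simp add: supp_qt_monom, simp add: qt_monom_def split: if_splits)

lemma qt_mult_monom_right:
  assumes f: "f \<in> qt_carrier m"
  shows "qt_mult m L f (qt_monom j0 w) = (\<lambda>(j, c). f (j - j0 - bil m L (c - w) w, c - w))"
proof (rule ext, clarify)
  fix j c
  define p0 where "p0 = (j - j0 - bil m L (c - w) w, c - w)"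
  have "qt_mult m L f (qt_monom j0 w) (j, c) = (\<Sum>p\<in>supp f. \<Sum>q\<in>{(j0, w)}.
      if basis_mult m L p q = (j, c) then f p * qt_monom j0 w q else 0)"
    using qt_carrier_finite_supp[OF f] by (intro qt_mult_expand) (auto simp: supp_qt_monom)
  also have "\<dots> = (\<Sum>p\<in>supp f. if p = p0 then f p else 0)"
    by (intro sum.cong refl) (auto simp: basis_mult_def p0_def qt_monom_def)
  also have "\<dots> = f p0"
    using qt_carrier_finite_supp[OF f] by (simp add: sum.delta' supp_def)
  finally show "qt_mult m L f (qt_monom j0 w) (j, c) = f (j - j0 - bil m L (c - w) w, c - w)"
    by (simp add: p0_def)
qed

lemma qt_mult_monom_left:
  assumes f: "f \<in> qt_carrier m"
  shows "qt_mult m L (qt_monom j0 w) f = (\<lambda>(j, c). f (j - j0 - bil m L w (c - w), c - w))"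
proof (rule ext, clarify)
  fix j c
  define p0 where "p0 = (j - j0 - bil m L w (c - w), c - w)"
  have "qt_mult m L (qt_monom j0 w) f (j, c) = (\<Sum>q\<in>{(j0, w)}. \<Sum>p\<in>supp f.
      if basis_mult m L q p = (j, c) then qt_monom j0 w q * f p else 0)"
    using qt_carrier_finite_supp[OF f] by (intro qt_mult_expand) (auto simp: supp_qt_monom)
  also have "\<dots> = (\<Sum>p\<in>supp f. if p = p0 then f p else 0)"
    by (simp add: qt_monom_def) (intro sum.cong refl; auto simp: basis_mult_def p0_def qt_monom_def)
  also have "\<dots> = f p0"
    using qt_carrier_finite_supp[OF f] by (simp add: sum.delta' supp_def)
  finally show "qt_mult m L (qt_monom j0 w) f (j, c) = f (j - j0 - bil m L w (c - w), c - w)"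
    by (simp add: p0_def)
qed

lemma qX_carrier: "c \<in> zvec m \<Longrightarrow> qX c \<in> qt_carrier m"
  by (simp add: qX_eq_monom qt_monom_carrier)

lemma monom_mult_monom:
  assumes "c \<in> zvec m"
  shows "qt_mult m L (qt_monom j c) (qt_monom j' c') = qt_monom (j + j' + bil m L c c') (c + c')"
proof -
  have "qt_mult m L (qt_monom j c) (qt_monom j' c')
      = (\<lambda>(i, e). qt_monom j c (i - j' - bil m L (e - c') c', e - c'))"
    by (rule qt_mult_monom_right[OF qt_monom_carrier[OF assms]])
  also have "\<dots> = qt_monom (j + j' + bil m L c c') (c + c')"
  proof (rule ext, clarify)
    fix i e
    have "e - c' = c \<longleftrightarrow> e = c + c'"
      by (auto simp: diff_eq_eq)
    then show "qt_monom j c (i - j' - bil m L (e - c') c', e - c') = qt_monom (j + j' + bil m L c c') (c + c') (i, e)"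
      by (auto simp: qt_monom_def)
  qed
  finally show ?thesis .
qed

lemma qone_carrier: "qone \<in> qt_carrier m"
  unfolding qone_eq_monom by (rule qt_monom_carrier) (simp add: zvec_def)

lemma qt_mult_qone_left: "f \<in> qt_carrier m \<Longrightarrow> qt_mult m L qone f = f"
  by (simp add: qone_eq_monom qt_mult_monom_left)

lemma qt_mult_qone_right: "f \<in> qt_carrier m \<Longrightarrow> qt_mult m L f qone = f"
  by (simp add: qone_eq_monom qt_mult_monom_right)

lemma qt_add_carrier:
  assumes "f \<in> qt_carrier m" "g \<in> qt_carrier m"
  shows "(\<lambda>p. f p + g p) \<in> qt_carrier m"
proof (rule qt_carrierI)
  show "finite (supp (\<lambda>p. f p + g p))"
  proof (rule finite_subset)
    show "supp (\<lambda>p. f p + g p) \<subseteq> supp f \<union> supp g"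
      by (auto simp: supp_def)
  qed (use assms qt_carrier_finite_supp in blast)
next
  fix j c assume "f (j, c) + g (j, c) \<noteq> 0"
  then have "f (j, c) \<noteq> 0 \<or> g (j, c) \<noteq> 0" by auto
  then show "c \<in> zvec m" using assms by (auto simp: qt_carrier_def)
qed

lemma qt_zero_carrier: "(\<lambda>_. 0) \<in> qt_carrier m"
  by (simp add: qt_carrier_def)

lemma qt_uminus_carrier: "f \<in> qt_carrier m \<Longrightarrow> (\<lambda>p. - f p) \<in> qt_carrier m"
  by (simp add: qt_carrier_def)

lemma qt_mult_add_left:
  assumes f: "f \<in> qt_carrier m" and g: "g \<in> qt_carrier m" and h: "h \<in> qt_carrier m"
  shows "qt_mult m L (\<lambda>p. f p + g p) h = (\<lambda>p. qt_mult m L f h p + qt_mult m L g h p)"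
proof
  fix x
  define A where "A = supp f \<union> supp g"
  have fin: "finite A" "finite (supp h)" using f g h by (auto simp: A_def qt_carrier_finite_supp)
  have "qt_mult m L (\<lambda>p. f p + g p) h x
      = (\<Sum>p\<in>A. \<Sum>q\<in>supp h. if basis_mult m L p q = x then (f p + g p) * h q else 0)"
    using fin by (intro qt_mult_expand) (auto simp: A_def supp_def)
  also have "\<dots> = (\<Sum>p\<in>A. \<Sum>q\<in>supp h. if basis_mult m L p q = x then f p * h q else 0)
      + (\<Sum>p\<in>A. \<Sum>q\<in>supp h. if basis_mult m L p q = x then g p * h q else 0)"
    by (simp add: sum.distrib[symmetric] distrib_right if_distrib cong: if_cong)
  also have "\<dots> = qt_mult m L f h x + qt_mult m L g h x"
    using fin by (simp add: qt_mult_expand[where A=A and B="supp h"] A_def)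
  finally show "qt_mult m L (\<lambda>p. f p + g p) h x = qt_mult m L f h x + qt_mult m L g h x" .
qed

lemma qt_mult_add_right:
  assumes f: "f \<in> qt_carrier m" and g: "g \<in> qt_carrier m" and h: "h \<in> qt_carrier m"
  shows "qt_mult m L h (\<lambda>p. f p + g p) = (\<lambda>p. qt_mult m L h f p + qt_mult m L h g p)"
proof
  fix x
  define A where "A = supp f \<union> supp g"
  have fin: "finite A" "finite (supp h)" using f g h by (auto simp: A_def qt_carrier_finite_supp)
  have "qt_mult m L h (\<lambda>p. f p + g p) x
      = (\<Sum>q\<in>supp h. \<Sum>p\<in>A. if basis_mult m L q p = x then h q * (f p + g p) else 0)"
    using fin by (intro qt_mult_expand) (auto simp: A_def supp_def)
  also have "\<dots> = (\<Sum>q\<in>supp h. \<Sum>p\<in>A. if basis_mult m L q p = x then h q * f p else 0)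
      + (\<Sum>q\<in>supp h. \<Sum>p\<in>A. if basis_mult m L q p = x then h q * g p else 0)"
    by (simp add: sum.distrib[symmetric] distrib_left if_distrib cong: if_cong)
  also have "\<dots> = qt_mult m L h f x + qt_mult m L h g x"
    using fin by (simp add: qt_mult_expand[where B=A and A="supp h"] A_def)
  finally show "qt_mult m L h (\<lambda>p. f p + g p) x = qt_mult m L h f x + qt_mult m L h g x" .
qed

lemma quantum_torus_simps [simp]:
  "carrier (quantum_torus m L) = qt_carrier m"
  "mult (quantum_torus m L) = qt_mult m L"
  "one (quantum_torus m L) = qone"
  "zero (quantum_torus m L) = (\<lambda>_. 0)"
  "add (quantum_torus m L) = (\<lambda>f g p. f p + g p)"
  by (simp_all add: quantum_torus_def qone_def zero_fun_def)

lemma ring_quantum_torus: "ring (quantum_torus m L)"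
proof (rule ringI)
  show "abelian_group (quantum_torus m L)"
  proof (rule abelian_groupI)
    fix x assume "x \<in> carrier (quantum_torus m L)"
    then show "\<exists>y\<in>carrier (quantum_torus m L). y \<oplus>\<^bsub>quantum_torus m L\<^esub> x = \<zero>\<^bsub>quantum_torus m L\<^esub>"
      by (intro bexI[of _ "\<lambda>p. - x p"]) (auto simp: qt_uminus_carrier)
  qed (auto simp: qt_add_carrier add.assoc add.commute qt_zero_carrier)
  show "monoid (quantum_torus m L)"
    by (rule monoidI) (auto simp: qt_mult_closed qt_mult_assoc qt_mult_qone_left qt_mult_qone_right
      qone_carrier)
qed (auto simp: qt_mult_add_left qt_mult_add_right)

lemma qt_a_inv: "f \<in> qt_carrier m \<Longrightarrow> a_inv (quantum_torus m L) f = (\<lambda>p. - f p)"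
proof -
  assume f: "f \<in> qt_carrier m"
  interpret ring "quantum_torus m L" by (rule ring_quantum_torus)
  show ?thesis
    by (rule minus_equality) (auto simp: f qt_uminus_carrier)
qed

lemma qt_mult_uminus_left:
  "f \<in> qt_carrier m \<Longrightarrow> g \<in> qt_carrier m \<Longrightarrow> qt_mult m L (\<lambda>p. - f p) g = (\<lambda>p. - qt_mult m L f g p)"
proof -
  assume fg: "f \<in> qt_carrier m" "g \<in> qt_carrier m"
  interpret ring "quantum_torus m L" by (rule ring_quantum_torus)
  show ?thesis
    using l_minus[of f g] fg by (simp add: qt_a_inv qt_mult_closed)
qed

lemma qt_mult_uminus_right:
  "f \<in> qt_carrier m \<Longrightarrow> g \<in> qt_carrier m \<Longrightarrow> qt_mult m L f (\<lambda>p. - g p) = (\<lambda>p. - qt_mult m L f g p)"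
proof -
  assume fg: "f \<in> qt_carrier m" "g \<in> qt_carrier m"
  interpret ring "quantum_torus m L" by (rule ring_quantum_torus)
  show ?thesis
    using r_minus[of f g] fg by (simp add: qt_a_inv qt_mult_closed)
qed

lemma qt_mult_zero_left: "qt_mult m L (\<lambda>_. 0) g = (\<lambda>_. 0)"
  by (auto simp: qt_mult_def fun_eq_iff)

lemma qt_pow_carrier: "g \<in> qt_carrier m \<Longrightarrow> g [^]\<^bsub>quantum_torus m L\<^esub> (n::nat) \<in> qt_carrier m"
  by (induction n) (simp_all add: qt_mult_closed qone_carrier)

lemma qt_pow_Suc_left:
  "g \<in> qt_carrier m \<Longrightarrow> g [^]\<^bsub>quantum_torus m L\<^esub> Suc n = qt_mult m L g (g [^]\<^bsub>quantum_torus m L\<^esub> n)"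
proof -
  assume "g \<in> qt_carrier m"
  interpret ring "quantum_torus m L" by (rule ring_quantum_torus)
  show ?thesis
    using \<open>g \<in> qt_carrier m\<close> nat_pow_Suc2 by simp
qed

lemma qt_mult_commute_assoc:
  assumes "f \<in> qt_carrier m" "a \<in> qt_carrier m" "a' \<in> qt_carrier m" "x \<in> qt_carrier m"
    and "qt_mult m L f a = qt_mult m L a' f"
  shows "qt_mult m L f (qt_mult m L a x) = qt_mult m L a' (qt_mult m L f x)"
  using assms by (metis qt_mult_assoc)

definition qt_with_exponents :: "nat \<Rightarrow> ((nat \<Rightarrow> int) \<Rightarrow> bool) \<Rightarrow> qt_elem set" where
  "qt_with_exponents m P = {f \<in> qt_carrier m. \<forall>j c. f (j, c) \<noteq> 0 \<longrightarrow> P c}"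

lemma qt_with_exponentsI:
  "f \<in> qt_carrier m \<Longrightarrow> (\<And>j c. f (j, c) \<noteq> 0 \<Longrightarrow> P c) \<Longrightarrow> f \<in> qt_with_exponents m P"
  by (simp add: qt_with_exponents_def)

lemma qt_with_exponentsD:
  "f \<in> qt_with_exponents m P \<Longrightarrow> f \<in> qt_carrier m"
  "f \<in> qt_with_exponents m P \<Longrightarrow> f (j, c) \<noteq> 0 \<Longrightarrow> P c"
  by (simp_all add: qt_with_exponents_def)

lemma qt_with_exponents_mono:
  "f \<in> qt_with_exponents m P \<Longrightarrow> (\<And>c. P c \<Longrightarrow> Q c) \<Longrightarrow> f \<in> qt_with_exponents m Q"
  by (simp add: qt_with_exponents_def)

lemma qt_zero_qt_with_exponents: "(\<lambda>_. 0) \<in> qt_with_exponents m P"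
  by (simp add: qt_with_exponents_def qt_zero_carrier)

lemma qt_add_qt_with_exponents:
  "f \<in> qt_with_exponents m P \<Longrightarrow> g \<in> qt_with_exponents m P \<Longrightarrow> (\<lambda>p. f p + g p) \<in> qt_with_exponents m P"
  by (auto simp: qt_with_exponents_def qt_add_carrier) (metis add.right_neutral add_0)

lemma qt_uminus_qt_with_exponents:
  "f \<in> qt_with_exponents m P \<Longrightarrow> (\<lambda>p. - f p) \<in> qt_with_exponents m P"
  by (simp add: qt_with_exponents_def qt_uminus_carrier)

lemma qt_monom_qt_with_exponents: "c \<in> zvec m \<Longrightarrow> P c \<Longrightarrow> qt_monom j c \<in> qt_with_exponents m P"
  by (intro qt_with_exponentsI qt_monom_carrier) (simp_all add: qt_monom_def split: if_splits)

lemma qX_qt_with_exponents: "c \<in> zvec m \<Longrightarrow> P c \<Longrightarrow> qX c \<in> qt_with_exponents m P"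
  unfolding qX_eq_monom by (rule qt_monom_qt_with_exponents)

lemma qone_qt_with_exponents: "P 0 \<Longrightarrow> qone \<in> qt_with_exponents m P"
  using qX_qt_with_exponents[of 0 m P] by (simp add: qone_eq_monom qX_eq_monom zvec_def)

lemma qt_mult_qt_with_exponents:
  assumes f: "f \<in> qt_with_exponents m P" and g: "g \<in> qt_with_exponents m Q"
    and PQ: "\<And>c d. P c \<Longrightarrow> Q d \<Longrightarrow> R (c + d)"
  shows "qt_mult m L f g \<in> qt_with_exponents m R"
proof (rule qt_with_exponentsI)
  show "qt_mult m L f g \<in> qt_carrier m"
    using f g by (simp add: qt_mult_closed qt_with_exponentsD)
  fix j c assume "qt_mult m L f g (j, c) \<noteq> 0"
  then obtain p q where "f p \<noteq> 0" "g q \<noteq> 0" "basis_mult m L p q = (j, c)"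
    by (rule qt_mult_nonzeroE[OF qt_with_exponentsD(1)[OF f] qt_with_exponentsD(1)[OF g]])
  then show "R c"
    using f g PQ by (cases p, cases q) (auto simp: basis_mult_def qt_with_exponentsD)
qed

lemma subring_qt_with_exponents:
  assumes "P 0" and "\<And>c d. P c \<Longrightarrow> P d \<Longrightarrow> P (c + d)"
  shows "subring (qt_with_exponents m P) (quantum_torus m L)"
proof -
  interpret ring "quantum_torus m L" by (rule ring_quantum_torus)
  show ?thesis
  proof (rule subringI)
    fix f g assume f: "f \<in> qt_with_exponents m P" and g: "g \<in> qt_with_exponents m P"
    show "f \<otimes>\<^bsub>quantum_torus m L\<^esub> g \<in> qt_with_exponents m P"
      unfolding quantum_torus_simps by (rule qt_mult_qt_with_exponents[OF f g, where R = P]) (rule assms(2))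
    show "f \<oplus>\<^bsub>quantum_torus m L\<^esub> g \<in> qt_with_exponents m P"
      using f g by (simp add: qt_add_qt_with_exponents)
  next
    fix f assume "f \<in> qt_with_exponents m P"
    then show "\<ominus>\<^bsub>quantum_torus m L\<^esub> f \<in> qt_with_exponents m P"
      by (simp add: qt_a_inv qt_with_exponentsD(1) qt_uminus_qt_with_exponents)
  qed (auto simp: assms(1) qone_qt_with_exponents dest: qt_with_exponentsD(1))
qed

lemma generate_ring_subset_qt_with_exponents:
  assumes "P 0" and "\<And>c d. P c \<Longrightarrow> P d \<Longrightarrow> P (c + d)"
    and "H \<subseteq> qt_with_exponents m P"
  shows "generate_ring (quantum_torus m L) H \<subseteq> qt_with_exponents m P"
proof -
  interpret ring "quantum_torus m L" by (rule ring_quantum_torus)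
  show ?thesis
    using assms by (intro generate_ring_min_subring1 subring_qt_with_exponents)
      (auto simp: qt_with_exponents_def)
qed

lemma qt_pow_qt_with_exponents:
  assumes "P 0" and "\<And>c d. P c \<Longrightarrow> P d \<Longrightarrow> P (c + d)" and "g \<in> qt_with_exponents m P"
  shows "g [^]\<^bsub>quantum_torus m L\<^esub> (n::nat) \<in> qt_with_exponents m P"
  using assms
  by (induction n) (auto simp: qone_qt_with_exponents qt_pow_Suc_left qt_with_exponentsD(1)
      intro: qt_mult_qt_with_exponents)

lemma qt_pow_qt_with_exponents_coord:
  assumes "g \<in> qt_with_exponents m (\<lambda>c. c i = s)"
  shows "g [^]\<^bsub>quantum_torus m L\<^esub> n \<in> qt_with_exponents m (\<lambda>c. c i = int n * s)"
proof (induction n)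
  case 0
  show ?case
    by (simp add: qone_qt_with_exponents)
next
  case (Suc n)
  then show ?case
    using assms by (auto intro!: qt_mult_qt_with_exponents simp: algebra_simps)
qed

definition qt_part :: "((nat \<Rightarrow> int) \<Rightarrow> 'k) \<Rightarrow> 'k \<Rightarrow> qt_elem \<Rightarrow> qt_elem" where
  "qt_part \<kappa> v f = (\<lambda>(j, c). if \<kappa> c = v then f (j, c) else 0)"

lemma qt_part_apply [simp]: "qt_part \<kappa> v f (j, c) = (if \<kappa> c = v then f (j, c) else 0)"
  by (simp add: qt_part_def)

lemma qt_part_carrier: "f \<in> qt_carrier m \<Longrightarrow> qt_part \<kappa> v f \<in> qt_carrier m"
  by (rule qt_carrier_subset[of f]) (auto simp: qt_part_def split: prod.splits if_splits)

lemma qt_part_add: "qt_part \<kappa> v (\<lambda>p. f p + g p) = (\<lambda>p. qt_part \<kappa> v f p + qt_part \<kappa> v g p)"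
  and qt_part_uminus: "qt_part \<kappa> v (\<lambda>p. - f p) = (\<lambda>p. - qt_part \<kappa> v f p)"
  by (auto simp: fun_eq_iff)

lemma qt_part_homogeneous:
  assumes "f \<in> qt_with_exponents m (\<lambda>c. \<kappa> c = v)"
  shows "qt_part \<kappa> w f = (if w = v then f else (\<lambda>_. 0))"
  using assms by (auto simp: fun_eq_iff dest: qt_with_exponentsD(2))

lemma qt_part_mult_homogeneous:
  assumes "a \<in> qt_with_exponents m (\<lambda>c. c i = 0)" and "g \<in> qt_with_exponents m (\<lambda>c. c i = e)"
  shows "qt_part (\<lambda>c. c i) v (qt_mult m L a g) = qt_mult m L (if v = e then a else (\<lambda>_. 0)) g"
proof -
  have "qt_mult m L a g \<in> qt_with_exponents m (\<lambda>c. c i = e)"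
    using assms by (rule qt_mult_qt_with_exponents) simp
  then show ?thesis
    by (simp add: qt_part_homogeneous qt_mult_zero_left)
qed

lemma in_subring_by_parts_finite:
  assumes S: "subring S (quantum_torus m L)" and V: "finite V"
  shows "f \<in> qt_carrier m \<Longrightarrow> (\<lambda>(j, c). \<kappa> c) ` supp f \<subseteq> V \<Longrightarrow> (\<And>v. qt_part \<kappa> v f \<in> S) \<Longrightarrow> f \<in> S"
  using V
proof (induction V arbitrary: f rule: finite_induct)
  case empty
  then have "f = (\<lambda>_. 0)"
    by (auto simp: supp_def)
  then show ?case
    using subringE(2)[OF S] by simp
next
  case (insert v V)
  define rest where "rest = (\<lambda>p. f p - qt_part \<kappa> v f p)"
  have "rest \<in> S"
  proof (rule insert.IH)
    show "rest \<in> qt_carrier m"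
      using insert.prems(1) by (rule qt_carrier_subset) (auto simp: rest_def split: if_splits)
    show "(\<lambda>(j, c). \<kappa> c) ` supp rest \<subseteq> V"
      using insert.prems(2) by (force simp: rest_def supp_def split: if_splits)
    have "qt_part \<kappa> w rest = (if w = v then (\<lambda>_. 0) else qt_part \<kappa> w f)" for w
      by (auto simp: rest_def fun_eq_iff)
    then show "qt_part \<kappa> w rest \<in> S" for w
      using insert.prems(3) subringE(2)[OF S] by simp
  qed
  moreover have "f = (\<lambda>p. qt_part \<kappa> v f p + rest p)"
    by (simp add: rest_def)
  ultimately show "f \<in> S"
    using subringE(7)[OF S, of "qt_part \<kappa> v f" rest] insert.prems(3) by simp
qed

lemma in_subring_by_parts:
  assumes "subring S (quantum_torus m L)" and "f \<in> qt_carrier m"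
    and "\<And>v. qt_part \<kappa> v f \<in> S"
  shows "f \<in> S"
  by (rule in_subring_by_parts_finite[OF assms(1) finite_imageI[OF qt_carrier_finite_supp[OF assms(2)]]
        assms(2) order_refl assms(3)])

definition qt_twist :: "((nat \<Rightarrow> int) \<Rightarrow> int) \<Rightarrow> qt_elem \<Rightarrow> qt_elem" where
  "qt_twist \<theta> g = (\<lambda>(j, c). g (j - \<theta> c, c))"

lemma qt_twist_apply [simp]: "qt_twist \<theta> g (j, c) = g (j - \<theta> c, c)"
  by (simp add: qt_twist_def)

lemma supp_qt_twist: "supp (qt_twist \<theta> g) = (\<lambda>(j, c). (j + \<theta> c, c)) ` supp g"
  by (force simp: supp_def image_iff)

lemma qt_twist_qt_with_exponents:
  assumes g: "g \<in> qt_with_exponents m P"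
  shows "qt_twist \<theta> g \<in> qt_with_exponents m P"
proof (intro qt_with_exponentsI qt_carrierI)
  show "finite (supp (qt_twist \<theta> g))"
    using qt_carrier_finite_supp[OF qt_with_exponentsD(1)[OF g]] by (simp add: supp_qt_twist)
  fix j c assume "qt_twist \<theta> g (j, c) \<noteq> 0"
  then show "c \<in> zvec m" and "P c"
    using qt_carrier_exponent[OF qt_with_exponentsD(1)[OF g], of "(j - \<theta> c, c)"]
      qt_with_exponentsD(2)[OF g] by simp_all
qed

text \<open>If \<open>\<Lambda>(c, d) - \<Lambda>(d, c)\<close> only depends on the exponents \<open>d\<close> of \<open>g\<close>, then
  \<open>f g = g' f\<close> where \<open>g'\<close> rescales each monomial of \<open>g\<close> by the corresponding power of \<open>q\<close>.\<close>
lemma qt_mult_commute_twist: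
  assumes f: "f \<in> qt_carrier m" and g: "g \<in> qt_carrier m"
    and twist: "\<And>p q. f p \<noteq> 0 \<Longrightarrow> g q \<noteq> 0 \<Longrightarrow>
      bil m L (snd q) (snd p) + \<theta> (snd q) = bil m L (snd p) (snd q)"
  shows "qt_mult m L f g = qt_mult m L (qt_twist \<theta> g) f"
proof
  fix x
  define sh where "sh = (\<lambda>(j::int, c::nat \<Rightarrow> int). (j + \<theta> c, c))"
  have inj: "inj_on sh (supp g)"
    by (rule inj_onI) (auto simp: sh_def)
  have fin: "finite (supp f)" "finite (supp g)"
    using f g by (simp_all add: qt_carrier_finite_supp)
  have "qt_mult m L (qt_twist \<theta> g) f x = (\<Sum>q'\<in>sh ` supp g. \<Sum>p\<in>supp f.
      if basis_mult m L q' p = x then qt_twist \<theta> g q' * f p else 0)"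
    using fin by (intro qt_mult_expand) (auto simp: supp_qt_twist sh_def)
  also have "\<dots> = (\<Sum>q\<in>supp g. \<Sum>p\<in>supp f.
      if basis_mult m L (sh q) p = x then qt_twist \<theta> g (sh q) * f p else 0)"
    by (rule sum.reindex[OF inj, unfolded comp_def])
  also have "\<dots> = (\<Sum>q\<in>supp g. \<Sum>p\<in>supp f. if basis_mult m L p q = x then f p * g q else 0)"
  proof (intro sum.cong refl)
    fix q p assume "q \<in> supp g" "p \<in> supp f"
    then have "bil m L (snd q) (snd p) + \<theta> (snd q) = bil m L (snd p) (snd q)"
      using twist by (simp add: supp_def)
    then have "basis_mult m L (sh q) p = basis_mult m L p q"
      by (cases p, cases q) (simp add: basis_mult_def sh_def algebra_simps)
    moreover have "qt_twist \<theta> g (sh q) = g q"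
      by (cases q) (simp add: sh_def)
    ultimately show "(if basis_mult m L (sh q) p = x then qt_twist \<theta> g (sh q) * f p else 0)
        = (if basis_mult m L p q = x then f p * g q else 0)"
      by simp
  qed
  also have "\<dots> = qt_mult m L f g x"
    using fin by (subst sum.swap) (simp add: qt_mult_expand)
  finally show "qt_mult m L f g x = qt_mult m L (qt_twist \<theta> g) f x" ..
qed

section \<open>Lowest terms\<close>

definition lowest_term :: "nat \<Rightarrow> nat \<Rightarrow> qt_elem \<Rightarrow> (nat \<Rightarrow> int) \<Rightarrow> int \<Rightarrow> bool" where
  "lowest_term m i g c0 j0 \<longleftrightarrow> g \<in> qt_carrier m \<and> (\<forall>j. g (j, c0) = (if j = j0 then 1 else 0)) \<and>
     (\<forall>j c. g (j, c) \<noteq> 0 \<longrightarrow> c0 i \<le> c i \<and> (c i = c0 i \<longrightarrow> c = c0))"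

lemma lowest_termD:
  assumes "lowest_term m i g c0 j0"
  shows "g \<in> qt_carrier m" and "g (j, c0) = (if j = j0 then 1 else 0)"
    and "g (j, c) \<noteq> 0 \<Longrightarrow> c0 i \<le> c i" and "g (j, c) \<noteq> 0 \<Longrightarrow> c i = c0 i \<Longrightarrow> c = c0"
  using assms by (simp_all add: lowest_term_def)

lemma lowest_term_qt_with_exponents:
  "lowest_term m i g c0 j0 \<Longrightarrow> g \<in> qt_with_exponents m (\<lambda>c. c0 i \<le> c i)"
  by (auto simp: lowest_term_def qt_with_exponents_def)

lemma basis_mult_lowest_unique:
  assumes g: "lowest_term m i g cg jg" and g_k: "g \<in> qt_with_exponents m (\<lambda>c'. cg k \<le> c' k)"
    and f: "f \<in> qt_with_exponents m (\<lambda>c'. c k \<le> c' k \<and> (c' k = c k \<longrightarrow> c i \<le> c' i))"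
    and pq: "f p \<noteq> 0" "g q \<noteq> 0" "basis_mult m L p q = (j, c + cg)"
  shows "p = (j - jg - bil m L c cg, c) \<and> q = (jg, cg)"
proof -
  obtain jp cp jq cq where pq_eq: "p = (jp, cp)" "q = (jq, cq)" by fastforce
  have sum_c: "cp + cq = c + cg" and sum_j: "jp + jq + bil m L cp cq = j"
    using pq(3) by (simp_all add: basis_mult_def pq_eq)
  have f_nz: "f (jp, cp) \<noteq> 0" and g_nz: "g (jq, cq) \<noteq> 0"
    using pq by (simp_all add: pq_eq)
  note f_min = qt_with_exponentsD(2)[OF f f_nz] and g_min = qt_with_exponentsD(2)[OF g_k g_nz]
  have sum_k: "cp k + cq k = c k + cg k" and sum_i: "cp i + cq i = c i + cg i"
    using fun_cong[OF sum_c, of k] fun_cong[OF sum_c, of i] by simp_all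
  then have "cp k = c k"
    using f_min g_min by linarith
  then have "cq i = cg i"
    using sum_i f_min lowest_termD(3)[OF g g_nz] by linarith
  then have "cq = cg"
    by (rule lowest_termD(4)[OF g g_nz])
  moreover from this have "cp = c"
    using sum_c by simp
  moreover have "jq = jg"
    using lowest_termD(2)[OF g, of jq] g_nz by (simp add: \<open>cq = cg\<close> split: if_splits)
  ultimately show ?thesis
    using sum_j by (simp add: pq_eq algebra_simps)
qed

lemma qt_mult_lowest_term_coeff:
  assumes g: "lowest_term m i g cg jg" and g_k: "g \<in> qt_with_exponents m (\<lambda>c'. cg k \<le> c' k)"
    and f: "f \<in> qt_with_exponents m (\<lambda>c'. c k \<le> c' k \<and> (c' k = c k \<longrightarrow> c i \<le> c' i))"
  shows "qt_mult m L f g (j, c + cg) = f (j - jg - bil m L c cg, c)"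
proof -
  define p0 where "p0 = (j - jg - bil m L c cg, c)"
  have fin: "finite (supp f)" "finite (supp g)"
    using qt_with_exponentsD(1)[OF f] lowest_termD(1)[OF g] by (simp_all add: qt_carrier_finite_supp)
  have g0: "g (jg, cg) = 1"
    using lowest_termD(2)[OF g] by simp
  have "qt_mult m L f g (j, c + cg) = (\<Sum>p\<in>supp f. \<Sum>q\<in>supp g.
      if basis_mult m L p q = (j, c + cg) then f p * g q else 0)"
    using fin by (intro qt_mult_expand) auto
  also have "\<dots> = (\<Sum>p\<in>supp f. \<Sum>q\<in>supp g. if p = p0 \<and> q = (jg, cg) then f p else 0)"
  proof (intro sum.cong refl)
    fix p q assume pq: "p \<in> supp f" "q \<in> supp g"
    have "basis_mult m L p0 (jg, cg) = (j, c + cg)"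
      by (simp add: basis_mult_def p0_def)
    moreover have "basis_mult m L p q = (j, c + cg) \<Longrightarrow> p = p0 \<and> q = (jg, cg)"
      using basis_mult_lowest_unique[OF g g_k f] pq by (simp add: supp_def p0_def)
    ultimately show "(if basis_mult m L p q = (j, c + cg) then f p * g q else 0) =
        (if p = p0 \<and> q = (jg, cg) then f p else 0)"
      using g0 by (cases "basis_mult m L p q = (j, c + cg)") auto
  qed
  also have "\<dots> = (\<Sum>p\<in>supp f. if p = p0 then f p else 0)"
    using fin(2) g0 by (intro sum.cong refl) (simp add: sum.delta' supp_def)
  also have "\<dots> = f p0"
    using fin(1) by (simp add: sum.delta' supp_def)
  finally show ?thesis
    by (simp add: p0_def)
qed

lemma lowest_term_mult:
  assumes f: "lowest_term m i f cf jf" and g: "lowest_term m i g cg jg"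
  shows "lowest_term m i (qt_mult m L f g) (cf + cg) (jf + jg + bil m L cf cg)"
proof -
  have fc: "f \<in> qt_carrier m" and gc: "g \<in> qt_carrier m"
    using f g by (simp_all add: lowest_termD(1))
  have "f \<in> qt_with_exponents m (\<lambda>c'. cf i \<le> c' i \<and> (c' i = cf i \<longrightarrow> cf i \<le> c' i))"
    using lowest_term_qt_with_exponents[OF f] by (rule qt_with_exponents_mono) simp
  from qt_mult_lowest_term_coeff[where k = i and c = cf, OF g lowest_term_qt_with_exponents[OF g] this]
  have coeff: "qt_mult m L f g (j, cf + cg) = f (j - jg - bil m L cf cg, cf)" for j .
  have exps: "(cf + cg) i \<le> c i \<and> (c i = (cf + cg) i \<longrightarrow> c = cf + cg)"
    if nz: "qt_mult m L f g (j, c) \<noteq> 0" for j c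
  proof -
    obtain p q where pq: "f p \<noteq> 0" "g q \<noteq> 0" "basis_mult m L p q = (j, c)"
      by (rule qt_mult_nonzeroE[OF fc gc nz])
    obtain jp cp jq cq where "p = (jp, cp)" "q = (jq, cq)" by fastforce
    with pq have "c = cp + cq" "f (jp, cp) \<noteq> 0" "g (jq, cq) \<noteq> 0"
      by (auto simp: basis_mult_def)
    then show ?thesis
      using lowest_termD(3,4)[OF f, of jp cp] lowest_termD(3,4)[OF g, of jq cq]
      by (auto simp: fun_eq_iff)
  qed
  show ?thesis
    unfolding lowest_term_def
    using qt_mult_closed[OF fc gc] exps lowest_termD(2)[OF f] by (auto simp: coeff)
qed

lemma lowest_term_qone: "lowest_term m i qone 0 0"
  using qone_carrier by (auto simp: lowest_term_def qone_def)

lemma lowest_term_pow: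
  assumes "lowest_term m i g c0 0"
  shows "\<exists>j. lowest_term m i (g [^]\<^bsub>quantum_torus m L\<^esub> n) (\<lambda>k. int n * c0 k) j"
proof (induction n)
  case 0
  then show ?case
    using lowest_term_qone by (auto simp: zero_fun_def)
next
  case (Suc n)
  then obtain j where "lowest_term m i (g [^]\<^bsub>quantum_torus m L\<^esub> n) (\<lambda>k. int n * c0 k) j" ..
  from lowest_term_mult[OF this assms]
  show ?case
    by (auto simp: plus_fun_def algebra_simps)
qed

lemma exists_lex_min_exponent:
  assumes f: "f \<in> qt_carrier m" and nz: "f (j0, c0) \<noteq> 0"
  obtains j c where "f (j, c) \<noteq> 0"
    and "f \<in> qt_with_exponents m (\<lambda>c'. c k \<le> c' k \<and> (c' k = c k \<longrightarrow> c i \<le> c' i))"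
proof -
  have "supp f \<noteq> {}"
    using nz by (auto simp: supp_def)
  then obtain p where "is_arg_min (\<lambda>p. (snd p k, snd p i)) (\<lambda>p. p \<in> supp f) p"
    using ex_is_arg_min_if_finite[OF qt_carrier_finite_supp[OF f]] by blast
  then have p: "p \<in> supp f" and min: "\<forall>q\<in>supp f. (snd p k, snd p i) \<le> (snd q k, snd q i)"
    unfolding is_arg_min_linorder by blast+
  show thesis
  proof (rule that[of "fst p" "snd p"])
    show "f (fst p, snd p) \<noteq> 0"
      using p by (simp add: supp_def)
    show "f \<in> qt_with_exponents m (\<lambda>c'. snd p k \<le> c' k \<and> (c' k = snd p k \<longrightarrow> snd p i \<le> c' i))"
    proof (rule qt_with_exponentsI[OF f])
      fix j' c' assume "f (j', c') \<noteq> 0"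
      then have "(snd p k, snd p i) \<le> (c' k, c' i)"
        using min by (force simp: supp_def)
      then show "snd p k \<le> c' k \<and> (c' k = snd p k \<longrightarrow> snd p i \<le> c' i)"
        by (auto simp: less_eq_prod_def)
    qed
  qed
qed

text \<open>The lexicographically lowest monomial of \<open>f\<close> survives in \<open>f g\<close>, because the lowest term
  of \<open>g\<close> has vanishing \<open>k\<close>-th exponent.\<close>
lemma nonneg_exponent_cancel_right:
  assumes f: "f \<in> qt_carrier m"
    and g: "g \<in> qt_with_exponents m (\<lambda>c. 0 \<le> c k)" and low: "lowest_term m i g cg jg"
    and cg: "cg k = 0"
    and fg: "qt_mult m L f g \<in> qt_with_exponents m (\<lambda>c. 0 \<le> c k)"
  shows "f \<in> qt_with_exponents m (\<lambda>c. 0 \<le> c k)"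
proof (rule qt_with_exponentsI[OF f])
  fix j0 c0 assume nz0: "f (j0, c0) \<noteq> 0"
  obtain j c where nz: "f (j, c) \<noteq> 0"
    and min: "f \<in> qt_with_exponents m (\<lambda>c'. c k \<le> c' k \<and> (c' k = c k \<longrightarrow> c i \<le> c' i))"
    by (rule exists_lex_min_exponent[OF f nz0])
  have "g \<in> qt_with_exponents m (\<lambda>c'. cg k \<le> c' k)"
    using cg by (intro qt_with_exponents_mono[OF g]) simp
  from qt_mult_lowest_term_coeff[where k = k and c = c, OF low this min, of L "j + jg + bil m L c cg"]
  have "qt_mult m L f g (j + jg + bil m L c cg, c + cg) = f (j, c)"
    by simp
  then have "0 \<le> (c + cg) k"
    using qt_with_exponentsD(2)[OF fg] nz by metis
  then show "0 \<le> c0 k"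
    using qt_with_exponentsD(2)[OF min nz0] cg by simp
qed

lemma ZP_eq: "ZP m 2 = qt_with_exponents m (\<lambda>c. c 1 = 0 \<and> c 2 = 0)"
proof -
  have "{1..2::nat} = {1, 2}"
    by auto
  then show ?thesis
    by (auto simp: ZP_def qt_with_exponents_def)
qed

lemma ZP_qt_with_exponents:
  "(\<And>c. c 1 = 0 \<Longrightarrow> c 2 = 0 \<Longrightarrow> P c) \<Longrightarrow> ZP m 2 \<subseteq> qt_with_exponents m P"
  by (auto simp: ZP_eq elim!: qt_with_exponents_mono)

definition exp12 :: "int \<Rightarrow> int \<Rightarrow> nat \<Rightarrow> int" where
  "exp12 a b = (\<lambda>k. if k = 1 then a else if k = 2 then b else 0)"

lemma exp12_zvec: "2 \<le> m \<Longrightarrow> exp12 a b \<in> zvec m"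
  by (simp add: exp12_def zvec_def)

lemma exp12_add: "exp12 a b + exp12 a' b' = exp12 (a + a') (b + b')"
  by (simp add: exp12_def fun_eq_iff)

lemma qX_multiple_in_generate_ring:
  assumes "qX v \<in> generate_ring (quantum_torus m L) H" "v \<in> zvec m" "bil m L v v = 0"
  shows "qX (\<lambda>k. int n * v k) \<in> generate_ring (quantum_torus m L) H"
proof (induction n)
  case 0
  have "qX (\<lambda>k. int 0 * v k) = qone"
    by (simp add: qX_eq_monom qone_eq_monom zero_fun_def)
  then show ?case
    using generate_ring.one[of "quantum_torus m L" H] by simp
next
  case (Suc n)
  have "qt_mult m L (qX v) (qX (\<lambda>k. int n * v k)) = qX (\<lambda>k. int (Suc n) * v k)"
    using assms(2,3) by (simp add: qX_eq_monom monom_mult_monom bil_scale_right plus_fun_def algebra_simps)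
  then show ?case
    using generate_ring.eng_mult[OF assms(1) Suc.IH] by simp
qed

lemma monom_exp12_in_generate_ring:
  assumes "2 \<le> m"
    and "qX (exp12 a 0) \<in> generate_ring (quantum_torus m L) H"
    and "qX (exp12 0 b) \<in> generate_ring (quantum_torus m L) H"
  shows "\<exists>j0. qt_monom j0 (exp12 a b) \<in> generate_ring (quantum_torus m L) H"
proof -
  have "qt_mult m L (qX (exp12 a 0)) (qX (exp12 0 b))
      = qt_monom (bil m L (exp12 a 0) (exp12 0 b)) (exp12 a b)"
    using assms(1) by (simp add: qX_eq_monom monom_mult_monom exp12_zvec exp12_add)
  then show ?thesis
    using generate_ring.eng_mult[OF assms(2,3)] by auto
qed

lemma monom_exp12_in_generate_ring_nonneg:
  assumes m: "2 \<le> m" and skew: "skew_sym m L"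
    and X: "qX (ebasis 1) \<in> generate_ring (quantum_torus m L) H"
      "qX (ebasis 2) \<in> generate_ring (quantum_torus m L) H"
    and b: "0 \<le> b \<or> qX (\<lambda>k. - ebasis 2 k) \<in> generate_ring (quantum_torus m L) H"
    and "0 \<le> a"
  shows "\<exists>j0. qt_monom j0 (exp12 a b) \<in> generate_ring (quantum_torus m L) H"
proof (rule monom_exp12_in_generate_ring[OF m])
  have e: "ebasis i \<in> zvec m" "(\<lambda>k. - ebasis i k) \<in> zvec m" if "i \<in> {1..2}" for i
    using m that by (auto simp: ebasis_def zvec_def)
  obtain n where "a = int n"
    using \<open>0 \<le> a\<close> nonneg_int_cases by blast
  then have "exp12 a 0 = (\<lambda>k. int n * ebasis 1 k)"
    by (auto simp: exp12_def ebasis_def)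
  then show "qX (exp12 a 0) \<in> generate_ring (quantum_torus m L) H"
    using qX_multiple_in_generate_ring[OF X(1) e(1) bil_self[OF skew]] by simp
  show "qX (exp12 0 b) \<in> generate_ring (quantum_torus m L) H"
  proof (cases "0 \<le> b")
    case True
    then obtain n where "b = int n"
      using nonneg_int_cases by blast
    then have "exp12 0 b = (\<lambda>k. int n * ebasis 2 k)"
      by (auto simp: exp12_def ebasis_def)
    then show ?thesis
      using qX_multiple_in_generate_ring[OF X(2) e(1) bil_self[OF skew]] by simp
  next
    case False
    then have "qX (\<lambda>k. - ebasis 2 k) \<in> generate_ring (quantum_torus m L) H"
      using b by simp
    from qX_multiple_in_generate_ring[OF this e(2) bil_self[OF skew], of "nat (- b)"]
    have "qX (\<lambda>k. int (nat (- b)) * - ebasis 2 k) \<in> generate_ring (quantum_torus m L) H"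
      by simp
    moreover have "exp12 0 b = (\<lambda>k. int (nat (- b)) * - ebasis 2 k)"
      using False by (auto simp: exp12_def ebasis_def)
    ultimately show ?thesis
      by simp
  qed
qed

text \<open>The part of \<open>f\<close> with \<open>X\<^sub>1\<close>-degree \<open>a\<close> and \<open>X\<^sub>2\<close>-degree \<open>b\<close> is an element of \<open>\<int>P\<close> times
  \<open>X\<^sub>1\<^sup>a X\<^sub>2\<^sup>b\<close>; the \<open>\<int>P\<close>-factor is obtained by multiplying with the inverse monomial.\<close>
lemma qt_part12_in_generate_ring:
  assumes m: "2 \<le> m" and skew: "skew_sym m L" and H: "ZP m 2 \<subseteq> H" and f: "f \<in> qt_carrier m"
    and mon: "qt_monom j0 (exp12 a b) \<in> generate_ring (quantum_torus m L) H"
  shows "qt_part (\<lambda>c. (c 1, c 2)) (a, b) f \<in> generate_ring (quantum_torus m L) H"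
proof -
  define w where "w = exp12 a b"
  define r where "r = qt_part (\<lambda>c. (c 1, c 2)) (a, b) f"
  define g where "g = qt_mult m L r (qt_monom (- j0) (- w))"
  have w: "w \<in> zvec m" "- w \<in> zvec m"
    using m by (simp_all add: w_def exp12_def zvec_def)
  have r: "r \<in> qt_with_exponents m (\<lambda>c. c 1 = a \<and> c 2 = b)"
    using f by (intro qt_with_exponentsI) (simp_all add: r_def qt_part_carrier split: if_splits)
  have "g \<in> ZP m 2"
    unfolding ZP_eq g_def
    by (rule qt_mult_qt_with_exponents[OF r qt_monom_qt_with_exponents[OF w(2), of "\<lambda>c. c = - w"]])
      (auto simp: w_def exp12_def)
  moreover have "qt_mult m L (qt_monom (- j0) (- w)) (qt_monom j0 w) = qone"
    using w bil_self[OF skew, of w] by (simp add: monom_mult_monom bil_uminus_left qone_eq_monom)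
  then have "qt_mult m L g (qt_monom j0 w) = r"
    using w r by (simp add: g_def qt_mult_assoc qt_monom_carrier qt_mult_qone_right qt_with_exponentsD(1))
  ultimately show ?thesis
    using H generate_ring.eng_mult[OF generate_ring.incl mon[folded w_def]] unfolding r_def by force
qed

lemma in_generate_ring_by_monomials:
  assumes m: "2 \<le> m" and skew: "skew_sym m L" and H: "ZP m 2 \<subseteq> H" "H \<subseteq> qt_carrier m"
    and f: "f \<in> qt_carrier m"
    and mon: "\<And>j c. f (j, c) \<noteq> 0 \<Longrightarrow>
      \<exists>j0. qt_monom j0 (exp12 (c 1) (c 2)) \<in> generate_ring (quantum_torus m L) H"
  shows "f \<in> generate_ring (quantum_torus m L) H"
proof -
  interpret ring "quantum_torus m L" by (rule ring_quantum_torus)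
  show ?thesis
  proof (rule in_subring_by_parts[OF generate_ring_is_subring f])
    show "H \<subseteq> carrier (quantum_torus m L)"
      using H by simp
    fix v :: "int \<times> int"
    obtain a b where v: "v = (a, b)" by fastforce
    show "qt_part (\<lambda>c. (c 1, c 2)) v f \<in> generate_ring (quantum_torus m L) H"
    proof (cases "\<exists>j c. f (j, c) \<noteq> 0 \<and> (c 1, c 2) = v")
      case True
      then obtain j c where "f (j, c) \<noteq> 0" "c 1 = a" "c 2 = b"
        using v by auto
      then obtain j0 where "qt_monom j0 (exp12 a b) \<in> generate_ring (quantum_torus m L) H"
        using mon by blast
      then show ?thesis
        unfolding v by (rule qt_part12_in_generate_ring[OF m skew H(1) f])
    next
      case False
      then have "qt_part (\<lambda>c. (c 1, c 2)) v f = \<zero>\<^bsub>quantum_torus m L\<^esub>"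
        by (auto simp: fun_eq_iff)
      then show ?thesis
        using zero_in_generate by simp
    qed
  qed
qed

text \<open>The elements mapping \<open>W\<close> into itself by left multiplication form a subring, which
  contains \<open>H\<close>; as \<open>\<one> \<in> W\<close>, this subring lies in \<open>W\<close>.\<close>
lemma (in ring) generate_ring_subset_left_stable:
  assumes H: "H \<subseteq> carrier R" and W: "W \<subseteq> carrier R" "\<one> \<in> W"
    and add: "\<And>u v. u \<in> W \<Longrightarrow> v \<in> W \<Longrightarrow> u \<oplus> v \<in> W" and neg: "\<And>u. u \<in> W \<Longrightarrow> \<ominus> u \<in> W"
    and stable: "\<And>h w. h \<in> H \<Longrightarrow> w \<in> W \<Longrightarrow> h \<otimes> w \<in> W"
  shows "generate_ring R H \<subseteq> W"
proof -
  define M where "M = {g \<in> carrier R. \<forall>w\<in>W. g \<otimes> w \<in> W}"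
  have "subring M R"
  proof (rule subringI)
    show "M \<subseteq> carrier R" "\<one> \<in> M"
      using W by (auto simp: M_def subset_iff)
  next
    fix g g' assume g: "g \<in> M" and g': "g' \<in> M"
    then show "g \<otimes> g' \<in> M"
      using W(1) by (auto simp: M_def m_assoc subset_iff)
    show "g \<oplus> g' \<in> M"
      using W(1) g g' add by (auto simp: M_def l_distr subset_iff)
  next
    fix g assume "g \<in> M"
    then show "\<ominus> g \<in> M"
      using W(1) neg by (auto simp: M_def l_minus subset_iff)
  qed
  moreover have "H \<subseteq> M"
    using H stable by (auto simp: M_def)
  ultimately have "generate_ring R H \<subseteq> M"
    by (rule generate_ring_min_subring1[OF H])
  then show ?thesis
    using W by (force simp: M_def)
qed

section \<open>Rank-two quantum seeds\<close>

locale quantum_seed_rank2 =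
  fixes m :: nat and L B :: "nat \<Rightarrow> nat \<Rightarrow> int" and d :: "nat \<Rightarrow> nat"
    and h :: "nat \<Rightarrow> nat \<Rightarrow> int \<Rightarrow> int"
  assumes seed: "quantum_seed m 2 L B d h"
begin

abbreviation "\<beta> \<equiv> beta m B d 2"

abbreviation "Y \<equiv> mut_var m B d h 2"

lemma two_le_m: "2 \<le> m"
  using seed by (simp add: quantum_seed_def)

lemma skew: "skew_sym m L"
  using seed by (simp add: quantum_seed_def compatible_pair_def)

lemma d_pos: "0 < d 2"
  using seed by (auto simp: quantum_seed_def)

lemma h_0: "h 2 0 = (\<lambda>j. if j = 0 then 1 else 0)"
  and h_d: "h 2 (d 2) = (\<lambda>j. if j = 0 then 1 else 0)"
  and h_finite: "r \<le> d 2 \<Longrightarrow> finite {j. h 2 r j \<noteq> 0}"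
proof -
  have "valid_h 2 d h"
    using seed by (simp add: quantum_seed_def)
  then have "(\<forall>r\<in>{0..d 2}. finite {j. h 2 r j \<noteq> 0}) \<and> h 2 0 = (\<lambda>j. if j = 0 then 1 else 0) \<and>
      h 2 (d 2) = (\<lambda>j. if j = 0 then 1 else 0)"
    unfolding valid_h_def by (meson atLeastAtMost_iff le_refl one_le_numeral)
  then show "h 2 0 = (\<lambda>j. if j = 0 then 1 else 0)" "h 2 (d 2) = (\<lambda>j. if j = 0 then 1 else 0)"
    and "r \<le> d 2 \<Longrightarrow> finite {j. h 2 r j \<noteq> 0}"
    by auto
qed

lemma beta_outside: "k \<notin> {1..m} \<Longrightarrow> \<beta> k = 0"
  unfolding beta_def by (rule if_not_P)

text \<open>Column 2 of \<open>\<Lambda> B = -[D; 0]\<close>, rewritten with \<open>b\<^sup>2 = d\<^sub>2 \<beta>\<close>.\<close>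
lemma L_beta_column: obtains D where "0 < D"
  and "\<And>k. k \<in> {1..m} \<Longrightarrow> int (d 2) * (\<Sum>j\<in>{1..m}. L k j * \<beta> j) = (if k = 2 then - D else 0)"
proof -
  obtain D :: "nat \<Rightarrow> int" where D: "\<forall>k\<in>{1..2}. 0 < D k"
    and LB: "\<forall>k\<in>{1..m}. \<forall>l\<in>{1..2}. (\<Sum>j\<in>{1..m}. L k j * B j l) = (if k = l then - D k else 0)"
    using seed unfolding quantum_seed_def compatible_pair_def by blast
  have dvd: "\<forall>j\<in>{1..m}. int (d 2) dvd B j 2"
    using seed unfolding quantum_seed_def by simp
  have "int (d 2) * (\<Sum>j\<in>{1..m}. L k j * \<beta> j) = (\<Sum>j\<in>{1..m}. L k j * B j 2)" for k
    unfolding sum_distrib_left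
  proof (rule sum.cong[OF refl])
    fix j assume "j \<in> {1..m}"
    then show "int (d 2) * (L k j * \<beta> j) = L k j * B j 2"
      using dvd by (simp add: beta_def)
  qed
  moreover have "(\<Sum>j\<in>{1..m}. L k j * B j 2) = (if k = 2 then - D 2 else 0)" if "k \<in> {1..m}" for k
    using LB that by simp
  ultimately show ?thesis
    using that[of "D 2"] D by simp
qed

lemma L_beta_zero: "k \<in> {1..m} \<Longrightarrow> k \<noteq> 2 \<Longrightarrow> (\<Sum>j\<in>{1..m}. L k j * \<beta> j) = 0"
  and L_beta_2_nonzero: "(\<Sum>j\<in>{1..m}. L 2 j * \<beta> j) \<noteq> 0"
proof -
  obtain D where D: "0 < D"
    and row: "\<And>k. k \<in> {1..m} \<Longrightarrow> int (d 2) * (\<Sum>j\<in>{1..m}. L k j * \<beta> j) = (if k = 2 then - D else 0)"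
    using L_beta_column by blast
  show "(\<Sum>j\<in>{1..m}. L k j * \<beta> j) = 0" if "k \<in> {1..m}" "k \<noteq> 2"
    using row[OF that(1)] that(2) d_pos by simp
  show "(\<Sum>j\<in>{1..m}. L 2 j * \<beta> j) \<noteq> 0"
    using row[of 2] two_le_m D by auto
qed

lemma bil_right_beta: "u 2 = 0 \<Longrightarrow> bil m L u \<beta> = 0"
proof -
  assume "u 2 = 0"
  then have "u k * (\<Sum>j\<in>{1..m}. L k j * \<beta> j) = 0" if "k \<in> {1..m}" for k
    using L_beta_zero[OF that] by (cases "k = 2") simp_all
  then show ?thesis
    by (simp add: bil_def sum_distrib_left algebra_simps)
qed

lemma bil_left_beta: "u 2 = 0 \<Longrightarrow> bil m L \<beta> u = 0"
  using bil_skew[OF skew, of \<beta> u] bil_right_beta by simp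

lemma beta_2: "\<beta> 2 = 0"
proof -
  have "bil m L \<beta> \<beta> = (\<Sum>k\<in>{1..m}. \<beta> k * (\<Sum>j\<in>{1..m}. L k j * \<beta> j))"
    by (simp add: bil_def sum_distrib_left algebra_simps)
  also have "\<dots> = \<beta> 2 * (\<Sum>j\<in>{1..m}. L 2 j * \<beta> j)"
    using two_le_m L_beta_zero by (subst sum.remove[of _ 2]) (auto intro: sum.neutral)
  finally show ?thesis
    using bil_self[OF skew, of \<beta>] L_beta_2_nonzero by simp
qed

lemma beta_nonzero: "\<exists>i\<in>{1..m}. \<beta> i \<noteq> 0"
proof (rule ccontr)
  assume "\<not> (\<exists>i\<in>{1..m}. \<beta> i \<noteq> 0)"
  then have "(\<Sum>j\<in>{1..m}. L 2 j * \<beta> j) = 0"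
    by simp
  then show False
    using L_beta_2_nonzero by simp
qed

definition Y_exp :: "nat \<Rightarrow> nat \<Rightarrow> int" where
  "Y_exp r = (\<lambda>k. int r * posp \<beta> k + int (d 2 - r) * posp (\<lambda>l. - \<beta> l) k - ebasis 2 k)"

lemma Y_apply: "Y (j, c) = (\<Sum>r\<in>{0..d 2}. if c = Y_exp r then h 2 r j else 0)"
  by (simp add: mut_var_def Y_exp_def)

lemma Y_exp_affine: "r \<le> d 2 \<Longrightarrow> Y_exp r = Y_exp 0 + (\<lambda>k. int r * \<beta> k)"
proof (rule ext)
  fix k assume "r \<le> d 2"
  then have "int (d 2 - r) = int (d 2) - int r"
    by simp
  then show "Y_exp r k = (Y_exp 0 + (\<lambda>k. int r * \<beta> k)) k"
    by (cases "0 \<le> \<beta> k") (simp_all add: Y_exp_def posp_def algebra_simps)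
qed

lemma Y_exp_2: "Y_exp r 2 = -1"
  using beta_2 by (simp add: Y_exp_def posp_def ebasis_def)

lemma Y_exp_1_nonneg: "0 \<le> Y_exp r 1"
  by (simp add: Y_exp_def posp_def ebasis_def)

lemma Y_exp_zvec: "Y_exp r \<in> zvec m"
  using two_le_m beta_outside by (auto simp: zvec_def Y_exp_def posp_def ebasis_def)

lemma Y_exp_inj:
  assumes "r \<le> d 2" "r' \<le> d 2" "Y_exp r = Y_exp r'"
  shows "r = r'"
proof -
  obtain i where "\<beta> i \<noteq> 0"
    using beta_nonzero by blast
  moreover have "Y_exp r i = Y_exp r' i"
    using assms(3) by simp
  then have "int r * \<beta> i = int r' * \<beta> i"
    using Y_exp_affine[OF assms(1)] Y_exp_affine[OF assms(2)] by simp
  ultimately show ?thesis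
    by simp
qed

lemma Y_nonzeroE:
  assumes "Y (j, c) \<noteq> 0"
  obtains r where "r \<le> d 2" "c = Y_exp r" "h 2 r j \<noteq> 0"
proof -
  obtain r where "r \<in> {0..d 2}" "(if c = Y_exp r then h 2 r j else 0) \<noteq> 0"
    using assms unfolding Y_apply by (rule sum.not_neutral_contains_not_neutral)
  then show thesis
    using that by (auto split: if_splits)
qed

lemma Y_at_exp:
  assumes "r \<le> d 2"
  shows "Y (j, Y_exp r) = h 2 r j"
proof -
  have "Y (j, Y_exp r) = (\<Sum>r'\<in>{0..d 2}. if r' = r then h 2 r' j else 0)"
    unfolding Y_apply using Y_exp_inj[OF assms] by (intro sum.cong) auto
  also have "\<dots> = h 2 r j"
    using assms by simp
  finally show ?thesis .
qed

lemma Y_carrier: "Y \<in> qt_carrier m"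
proof (rule qt_carrierI)
  have "supp Y \<subseteq> (\<Union>r\<in>{0..d 2}. (\<lambda>j. (j, Y_exp r)) ` {j. h 2 r j \<noteq> 0})"
  proof
    fix p assume "p \<in> supp Y"
    moreover obtain j c where p: "p = (j, c)" by fastforce
    ultimately obtain r where "r \<le> d 2" "c = Y_exp r" "h 2 r j \<noteq> 0"
      by (auto simp: supp_def elim: Y_nonzeroE)
    then show "p \<in> (\<Union>r\<in>{0..d 2}. (\<lambda>j. (j, Y_exp r)) ` {j. h 2 r j \<noteq> 0})"
      by (auto simp: p)
  qed
  moreover have "finite (\<Union>r\<in>{0..d 2}. (\<lambda>j. (j, Y_exp r)) ` {j. h 2 r j \<noteq> 0})"
    using h_finite by simp
  ultimately show "finite (supp Y)"
    by (rule finite_subset)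
next
  fix j c assume "Y (j, c) \<noteq> 0"
  then show "c \<in> zvec m"
    by (auto simp: Y_exp_zvec elim: Y_nonzeroE)
qed

lemma Y_exponents: "Y \<in> qt_with_exponents m (\<lambda>c. \<exists>r \<le> d 2. c = Y_exp r)"
  using Y_carrier by (auto intro!: qt_with_exponentsI elim: Y_nonzeroE)

abbreviation "T0 \<equiv> qt_with_exponents m (\<lambda>c. c 2 = 0)"
abbreviation "X2 \<equiv> qX (ebasis 2)"
abbreviation "X2_pow b \<equiv> X2 [^]\<^bsub>quantum_torus m L\<^esub> (b::nat)"
abbreviation "Y_pow k \<equiv> Y [^]\<^bsub>quantum_torus m L\<^esub> (k::nat)"
abbreviation "X1 \<equiv> qX (ebasis 1)"
abbreviation "ZP_A \<equiv> ZP_adj m 2 L {X1, X2, qX (\<lambda>k. - ebasis 2 k)}"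
abbreviation "ZP_B \<equiv> ZP_adj m 2 L {X1, qX (\<lambda>k. - ebasis 1 k), X2, Y}"
abbreviation "ZP_R \<equiv> ZP_adj m 2 L {X1, X2, Y}"

lemma Y_lowest_term:
  assumes "\<beta> i \<noteq> 0"
  shows "lowest_term m i Y (Y_exp (if 0 < \<beta> i then 0 else d 2)) 0"
proof -
  define r0 where "r0 = (if 0 < \<beta> i then 0 else d 2)"
  have r0: "r0 \<le> d 2"
    by (simp add: r0_def)
  have "Y (j, Y_exp r0) = (if j = 0 then 1 else 0)" for j
    using Y_at_exp[OF r0] h_0 h_d by (simp add: r0_def)
  moreover have "Y_exp r0 i \<le> c i \<and> (c i = Y_exp r0 i \<longrightarrow> c = Y_exp r0)"
    if nz: "Y (j, c) \<noteq> 0" for j c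
  proof -
    obtain r where r: "r \<le> d 2" "c = Y_exp r" "h 2 r j \<noteq> 0"
      by (rule Y_nonzeroE[OF nz])
    have "int r0 * \<beta> i \<le> int r * \<beta> i \<and> (int r * \<beta> i = int r0 * \<beta> i \<longrightarrow> r = r0)"
      using assms r(1) by (auto simp: r0_def mult_right_mono_neg)
    moreover have "c i = Y_exp 0 i + int r * \<beta> i"
      using fun_cong[OF Y_exp_affine[OF r(1)], of i] r(2) by simp
    moreover have "Y_exp r0 i = Y_exp 0 i + int r0 * \<beta> i"
      using fun_cong[OF Y_exp_affine[OF r0], of i] by simp
    ultimately show ?thesis
      using r(2) by auto
  qed
  ultimately show ?thesis
    using Y_carrier by (simp add: lowest_term_def r0_def)
qed

text \<open>Choosing \<open>i = 1\<close> whenever \<open>\<beta>\<^sub>1 \<noteq> 0\<close> makes the lowest exponent of \<open>Y\<close> free of \<open>X\<^sub>1\<close>.\<close>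
lemma Y_lowest_term_ex: "\<exists>i c0. lowest_term m i Y c0 0 \<and> c0 1 = 0"
proof -
  obtain i where i: "\<beta> i \<noteq> 0" "i = 1 \<or> \<beta> 1 = 0"
    using beta_nonzero by (cases "\<beta> 1 = 0") auto
  have "Y_exp (if 0 < \<beta> i then 0 else d 2) 1 = 0"
    using i by (auto simp: Y_exp_def posp_def ebasis_def)
  then show ?thesis
    using Y_lowest_term[OF i(1)] by blast
qed

lemma commute_past_T0:
  assumes g: "g \<in> qt_with_exponents m (\<lambda>c. \<exists>t. c = w + (\<lambda>k. t * \<beta> k))" and a: "a \<in> T0"
  shows "\<exists>a'\<in>T0. qt_mult m L g a = qt_mult m L a' g"
proof -
  define \<theta> where "\<theta> c = bil m L w c - bil m L c w" for c
  have "qt_mult m L g a = qt_mult m L (qt_twist \<theta> a) g"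
  proof (rule qt_mult_commute_twist)
    fix p q assume "g p \<noteq> 0" "a q \<noteq> 0"
    then obtain t where "snd p = w + (\<lambda>k. t * \<beta> k)" "snd q 2 = 0"
      using g a by (cases p, cases q) (auto dest: qt_with_exponentsD(2))
    then show "bil m L (snd q) (snd p) + \<theta> (snd q) = bil m L (snd p) (snd q)"
      by (simp add: \<theta>_def bil_add_left bil_add_right bil_scale_left bil_scale_right
          bil_right_beta bil_left_beta)
  qed (use g a in \<open>simp_all add: qt_with_exponentsD\<close>)
  then show ?thesis
    using qt_twist_qt_with_exponents[OF a] by blast
qed

lemma X2_exponents: "X2 \<in> qt_with_exponents m (\<lambda>c. c = ebasis 2)"
  using two_le_m by (intro qX_qt_with_exponents) (auto simp: ebasis_def zvec_def)

lemma X2_carrier: "X2 \<in> qt_carrier m"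
  using X2_exponents by (rule qt_with_exponentsD)

lemma X2_commute: "a \<in> T0 \<Longrightarrow> \<exists>a'\<in>T0. qt_mult m L X2 a = qt_mult m L a' X2"
  by (rule commute_past_T0[OF qt_with_exponents_mono[OF X2_exponents], where w = "ebasis 2"])
    (auto intro!: exI[of _ 0] simp: fun_eq_iff)

lemma Y_commute: "a \<in> T0 \<Longrightarrow> \<exists>a'\<in>T0. qt_mult m L Y a = qt_mult m L a' Y"
  by (rule commute_past_T0[OF qt_with_exponents_mono[OF Y_exponents], where w = "Y_exp 0"])
    (use Y_exp_affine in blast)

lemma X2_pow_exponents: "X2_pow n \<in> qt_with_exponents m (\<lambda>c. c 2 = int n)"
proof -
  have "X2 \<in> qt_with_exponents m (\<lambda>c. c 2 = 1)"
    by (rule qt_with_exponents_mono[OF X2_exponents]) (simp add: ebasis_def)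
  from qt_pow_qt_with_exponents_coord[OF this] show ?thesis
    by simp
qed

lemma Y_pow_exponents: "Y_pow n \<in> qt_with_exponents m (\<lambda>c. c 2 = - int n)"
proof -
  have "Y \<in> qt_with_exponents m (\<lambda>c. c 2 = -1)"
    by (rule qt_with_exponents_mono[OF Y_exponents]) (auto simp: Y_exp_2)
  from qt_pow_qt_with_exponents_coord[OF this] show ?thesis
    by simp
qed

lemma X2_Y_T0: "qt_mult m L X2 Y \<in> T0" and Y_X2_T0: "qt_mult m L Y X2 \<in> T0"
  using Y_exponents X2_exponents by (auto intro!: qt_mult_qt_with_exponents simp: Y_exp_2 ebasis_def)

end

section \<open>The \<open>T0\<close>-span of the powers of \<open>X\<^sub>2\<close> and \<open>Y\<close>\<close>

text \<open>Below, powers are unfolded from the left (\<open>qt_pow_Suc_left\<close>), as \<open>X\<^sub>2\<close> and \<open>Y\<close> act on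
  \<open>T0_span\<close> by left multiplication.\<close>
declare nat_pow_Suc [simp del]

context quantum_seed_rank2
begin

inductive_set T0_span :: "qt_elem set" where
  span_X2_pow: "a \<in> T0 \<Longrightarrow> qt_mult m L a (X2_pow b) \<in> T0_span"
| span_Y_pow: "a \<in> T0 \<Longrightarrow> qt_mult m L a (Y_pow (Suc k)) \<in> T0_span"
| span_add: "u \<in> T0_span \<Longrightarrow> v \<in> T0_span \<Longrightarrow> (\<lambda>p. u p + v p) \<in> T0_span"
| span_uminus: "u \<in> T0_span \<Longrightarrow> (\<lambda>p. - u p) \<in> T0_span"

lemma T0_span_carrier: "u \<in> T0_span \<Longrightarrow> u \<in> qt_carrier m"
  by (induction rule: T0_span.induct)
    (auto simp: qt_mult_closed qt_pow_carrier X2_carrier Y_carrier qt_add_carrier qt_uminus_carrier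
      dest: qt_with_exponentsD(1))

lemma T0_span_left_mult:
  assumes g: "g \<in> qt_carrier m" and u: "u \<in> T0_span"
    and X2_case: "\<And>a b. a \<in> T0 \<Longrightarrow> qt_mult m L g (qt_mult m L a (X2_pow b)) \<in> T0_span"
    and Y_case: "\<And>a k. a \<in> T0 \<Longrightarrow> qt_mult m L g (qt_mult m L a (Y_pow (Suc k))) \<in> T0_span"
  shows "qt_mult m L g u \<in> T0_span"
  using u
proof (induction rule: T0_span.induct)
  case (span_add u v)
  then show ?case
    using g by (simp add: qt_mult_add_right T0_span_carrier T0_span.span_add)
next
  case (span_uminus u)
  then show ?case
    using g by (simp add: qt_mult_uminus_right T0_span_carrier T0_span.span_uminus)
next
  case (span_X2_pow a b)
  then show ?case by (rule X2_case)
next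
  case (span_Y_pow a k)
  then show ?case by (rule Y_case)
qed

lemma T0_span_left_mult_T0:
  assumes g: "g \<in> T0" and u: "u \<in> T0_span"
  shows "qt_mult m L g u \<in> T0_span"
  using qt_with_exponentsD(1)[OF g] u
proof (rule T0_span_left_mult)
  fix a assume a: "a \<in> T0"
  then have ga: "qt_mult m L g a \<in> T0"
    using g by (auto intro: qt_mult_qt_with_exponents)
  have carriers: "g \<in> qt_carrier m" "a \<in> qt_carrier m"
    using g a by (simp_all add: qt_with_exponentsD(1))
  show "qt_mult m L g (qt_mult m L a (X2_pow b)) \<in> T0_span" for b
    using T0_span.span_X2_pow[OF ga, of b] carriers
    by (simp add: qt_mult_assoc qt_pow_carrier X2_carrier)
  show "qt_mult m L g (qt_mult m L a (Y_pow (Suc k))) \<in> T0_span" for k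
    using T0_span.span_Y_pow[OF ga, of k] carriers
    by (simp add: qt_mult_assoc qt_pow_carrier Y_carrier)
qed

lemma T0_span_left_mult_X2: "u \<in> T0_span \<Longrightarrow> qt_mult m L X2 u \<in> T0_span"
proof (erule T0_span_left_mult[OF X2_carrier])
  fix a assume a: "a \<in> T0"
  then obtain a' where a': "a' \<in> T0" "qt_mult m L X2 a = qt_mult m L a' X2"
    using X2_commute by blast
  note carriers = qt_with_exponentsD(1)[OF a] qt_with_exponentsD(1)[OF a'(1)] X2_carrier Y_carrier
  show "qt_mult m L X2 (qt_mult m L a (X2_pow b)) \<in> T0_span" for b
    using qt_mult_commute_assoc[OF X2_carrier carriers(1,2) qt_pow_carrier[OF X2_carrier] a'(2)] a'(1)
    by (simp add: qt_pow_Suc_left[OF X2_carrier, symmetric] T0_span.span_X2_pow)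
  show "qt_mult m L X2 (qt_mult m L a (Y_pow (Suc k))) \<in> T0_span" for k
  proof -
    have "qt_mult m L X2 (qt_mult m L a (Y_pow (Suc k)))
        = qt_mult m L a' (qt_mult m L X2 (qt_mult m L Y (Y_pow k)))"
      using qt_mult_commute_assoc[OF X2_carrier carriers(1,2) qt_pow_carrier[OF Y_carrier] a'(2),
          of L "Suc k"]
      by (simp add: qt_pow_Suc_left[OF Y_carrier])
    also have "\<dots> = qt_mult m L (qt_mult m L a' (qt_mult m L X2 Y)) (Y_pow k)"
      using carriers by (simp add: qt_mult_assoc qt_mult_closed qt_pow_carrier)
    finally have "qt_mult m L X2 (qt_mult m L a (Y_pow (Suc k)))
        = qt_mult m L (qt_mult m L a' (qt_mult m L X2 Y)) (Y_pow k)" .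
    moreover have "qt_mult m L a' (qt_mult m L X2 Y) \<in> T0"
      using a'(1) X2_Y_T0 by (auto intro: qt_mult_qt_with_exponents)
    ultimately show ?thesis
      using T0_span.span_X2_pow[of _ 0] T0_span.span_Y_pow by (cases k) auto
  qed
qed

lemma T0_span_left_mult_Y: "u \<in> T0_span \<Longrightarrow> qt_mult m L Y u \<in> T0_span"
proof (erule T0_span_left_mult[OF Y_carrier])
  fix a assume a: "a \<in> T0"
  then obtain a' where a': "a' \<in> T0" "qt_mult m L Y a = qt_mult m L a' Y"
    using Y_commute by blast
  note carriers = qt_with_exponentsD(1)[OF a] qt_with_exponentsD(1)[OF a'(1)] X2_carrier Y_carrier
  show "qt_mult m L Y (qt_mult m L a (Y_pow (Suc k))) \<in> T0_span" for k
    using qt_mult_commute_assoc[OF Y_carrier carriers(1,2) qt_pow_carrier[OF Y_carrier] a'(2)] a'(1)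
    by (simp add: qt_pow_Suc_left[OF Y_carrier, symmetric] T0_span.span_Y_pow)
  show "qt_mult m L Y (qt_mult m L a (X2_pow b)) \<in> T0_span" for b
  proof (cases b)
    case 0
    then show ?thesis
      using qt_mult_commute_assoc[OF Y_carrier carriers(1,2) qone_carrier a'(2)] a'(1)
        T0_span.span_Y_pow[of a' 0]
      by (simp add: qt_mult_qone_right Y_carrier qt_pow_Suc_left[OF Y_carrier])
  next
    case (Suc b')
    have "qt_mult m L Y (qt_mult m L a (X2_pow b))
        = qt_mult m L a' (qt_mult m L Y (qt_mult m L X2 (X2_pow b')))"
      using qt_mult_commute_assoc[OF Y_carrier carriers(1,2) qt_pow_carrier[OF X2_carrier] a'(2),
          of L b]
      by (simp add: Suc qt_pow_Suc_left[OF X2_carrier])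
    also have "\<dots> = qt_mult m L (qt_mult m L a' (qt_mult m L Y X2)) (X2_pow b')"
      using carriers by (simp add: qt_mult_assoc qt_mult_closed qt_pow_carrier)
    finally have "qt_mult m L Y (qt_mult m L a (X2_pow b))
        = qt_mult m L (qt_mult m L a' (qt_mult m L Y X2)) (X2_pow b')" .
    moreover have "qt_mult m L a' (qt_mult m L Y X2) \<in> T0"
      using a'(1) Y_X2_T0 by (auto intro: qt_mult_qt_with_exponents)
    ultimately show ?thesis
      by (simp add: T0_span.span_X2_pow)
  qed
qed

lemma ZP_B_subset_T0_span: "ZP_B \<subseteq> T0_span"
proof -
  interpret ring "quantum_torus m L" by (rule ring_quantum_torus)
  have "ZP m 2 \<union> {qX (ebasis 1), qX (\<lambda>k. - ebasis 1 k)} \<subseteq> T0"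
    using two_le_m ZP_qt_with_exponents[of "\<lambda>c. c 2 = 0" m]
    by (auto intro!: qX_qt_with_exponents simp: ebasis_def zvec_def)
  then have stable: "qt_mult m L g u \<in> T0_span"
    if "g \<in> ZP m 2 \<union> {qX (ebasis 1), qX (\<lambda>k. - ebasis 1 k), X2, Y}" "u \<in> T0_span" for g u
    using that T0_span_left_mult_T0 T0_span_left_mult_X2 T0_span_left_mult_Y by blast
  have "qt_mult m L qone (X2_pow 0) \<in> T0_span"
    by (rule T0_span.span_X2_pow) (simp add: qone_qt_with_exponents)
  then have "qone \<in> T0_span"
    by (simp add: qt_mult_qone_left qone_carrier)
  moreover have "ZP m 2 \<union> {qX (ebasis 1), qX (\<lambda>k. - ebasis 1 k), X2, Y} \<subseteq> qt_carrier m"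
    using two_le_m Y_carrier by (auto simp: ZP_def ebasis_def zvec_def intro!: qX_carrier)
  ultimately show ?thesis
    unfolding ZP_adj_def using stable
    by (intro generate_ring_subset_left_stable)
      (auto simp: T0_span_carrier qt_a_inv intro: T0_span.intros)
qed

lemma T0_span_negative_part:
  assumes "u \<in> T0_span"
  shows "\<exists>a\<in>T0. qt_part (\<lambda>c. c 2) (- int (Suc k)) u = qt_mult m L a (Y_pow (Suc k))"
  using assms
proof (induction rule: T0_span.induct)
  case (span_X2_pow a b)
  have "qt_part (\<lambda>c. c 2) (- int (Suc k)) (qt_mult m L a (X2_pow b)) = qt_mult m L (\<lambda>_. 0) (Y_pow (Suc k))"
    using qt_part_mult_homogeneous[OF span_X2_pow X2_pow_exponents] by (simp add: qt_mult_zero_left)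
  then show ?case
    using qt_zero_qt_with_exponents by blast
next
  case (span_Y_pow a k')
  have "qt_part (\<lambda>c. c 2) (- int (Suc k)) (qt_mult m L a (Y_pow (Suc k')))
      = qt_mult m L (if k = k' then a else (\<lambda>_. 0)) (Y_pow (Suc k))"
    using qt_part_mult_homogeneous[OF span_Y_pow Y_pow_exponents] by (simp add: qt_mult_zero_left)
  moreover have "(if k = k' then a else (\<lambda>_. 0)) \<in> T0"
    using span_Y_pow qt_zero_qt_with_exponents by simp
  ultimately show ?case
    by blast
next
  case (span_add u v)
  then obtain a b where ab: "a \<in> T0" "b \<in> T0"
    and "qt_part (\<lambda>c. c 2) (- int (Suc k)) u = qt_mult m L a (Y_pow (Suc k))"
      "qt_part (\<lambda>c. c 2) (- int (Suc k)) v = qt_mult m L b (Y_pow (Suc k))"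
    by blast
  then have "qt_part (\<lambda>c. c 2) (- int (Suc k)) (\<lambda>p. u p + v p) = qt_mult m L (\<lambda>p. a p + b p) (Y_pow (Suc k))"
    using qt_mult_add_left[OF qt_with_exponentsD(1)[OF ab(1)] qt_with_exponentsD(1)[OF ab(2)]
        qt_pow_carrier[OF Y_carrier]] by (simp add: qt_part_add)
  then show ?case
    using qt_add_qt_with_exponents[OF ab] by blast
next
  case (span_uminus u)
  then obtain a where a: "a \<in> T0"
    and "qt_part (\<lambda>c. c 2) (- int (Suc k)) u = qt_mult m L a (Y_pow (Suc k))"
    by blast
  then have "qt_part (\<lambda>c. c 2) (- int (Suc k)) (\<lambda>p. - u p) = qt_mult m L (\<lambda>p. - a p) (Y_pow (Suc k))"
    using qt_mult_uminus_left[OF qt_with_exponentsD(1)[OF a] qt_pow_carrier[OF Y_carrier]]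
    by (simp add: qt_part_uminus)
  then show ?case
    using qt_uminus_qt_with_exponents[OF a] by blast
qed

end

section \<open>The intersection\<close>

context quantum_seed_rank2
begin

lemma generators_carrier:
  "ZP m 2 \<union> {X1, X2, qX (\<lambda>k. - ebasis 2 k)} \<subseteq> qt_carrier m"
  "ZP m 2 \<union> {X1, X2, Y} \<subseteq> qt_carrier m"
  using two_le_m Y_carrier by (auto simp: ZP_def ebasis_def zvec_def intro!: qX_carrier)

lemma subring_ZP_R: "subring ZP_R (quantum_torus m L)"
proof -
  interpret ring "quantum_torus m L" by (rule ring_quantum_torus)
  show ?thesis
    unfolding ZP_adj_def using generators_carrier(2) by (intro generate_ring_is_subring) simp
qed

lemma nonneg_in_ZP_R:
  assumes "f \<in> qt_with_exponents m (\<lambda>c. 0 \<le> c 1 \<and> 0 \<le> c 2)"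
  shows "f \<in> ZP_R"
  unfolding ZP_adj_def
proof (rule in_generate_ring_by_monomials[OF two_le_m skew _ generators_carrier(2)])
  show "f \<in> qt_carrier m"
    using assms by (rule qt_with_exponentsD)
  have "X1 \<in> generate_ring (quantum_torus m L) (ZP m 2 \<union> {X1, X2, Y})"
    "X2 \<in> generate_ring (quantum_torus m L) (ZP m 2 \<union> {X1, X2, Y})"
    by (simp_all add: generate_ring.incl)
  then show "\<exists>j0. qt_monom j0 (exp12 (c 1) (c 2)) \<in> generate_ring (quantum_torus m L) (ZP m 2 \<union> {X1, X2, Y})"
    if "f (j, c) \<noteq> 0" for j c
    using qt_with_exponentsD(2)[OF assms that]
    by (intro monom_exp12_in_generate_ring_nonneg[OF two_le_m skew]) auto
qed blast

lemma Y_in_ZP_A: "Y \<in> ZP_A"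
  unfolding ZP_adj_def
proof (rule in_generate_ring_by_monomials[OF two_le_m skew _ generators_carrier(1) Y_carrier])
  have "X1 \<in> generate_ring (quantum_torus m L) (ZP m 2 \<union> {X1, X2, qX (\<lambda>k. - ebasis 2 k)})"
    "X2 \<in> generate_ring (quantum_torus m L) (ZP m 2 \<union> {X1, X2, qX (\<lambda>k. - ebasis 2 k)})"
    "qX (\<lambda>k. - ebasis 2 k) \<in> generate_ring (quantum_torus m L) (ZP m 2 \<union> {X1, X2, qX (\<lambda>k. - ebasis 2 k)})"
    by (simp_all add: generate_ring.incl)
  then show "\<exists>j0. qt_monom j0 (exp12 (c 1) (c 2))
      \<in> generate_ring (quantum_torus m L) (ZP m 2 \<union> {X1, X2, qX (\<lambda>k. - ebasis 2 k)})"
    if "Y (j, c) \<noteq> 0" for j c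
    using that Y_exp_1_nonneg
    by (intro monom_exp12_in_generate_ring_nonneg[OF two_le_m skew]) (auto elim: Y_nonzeroE)
qed blast

lemma ZP_R_subset_ZP_A: "ZP_R \<subseteq> ZP_A"
proof -
  interpret ring "quantum_torus m L" by (rule ring_quantum_torus)
  show ?thesis
    unfolding ZP_adj_def using generators_carrier Y_in_ZP_A[unfolded ZP_adj_def]
    by (intro generate_ring_min_subring1 generate_ring_is_subring) (auto intro: generate_ring.incl)
qed

lemma ZP_R_subset_ZP_B: "ZP_R \<subseteq> ZP_B"
proof -
  interpret ring "quantum_torus m L" by (rule ring_quantum_torus)
  show ?thesis
    unfolding ZP_adj_def using two_le_m Y_carrier
    by (intro mono_generate_ring) (auto simp: ZP_def ebasis_def zvec_def intro!: qX_carrier)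
qed

lemma Y_pow_in_ZP_R: "Y_pow n \<in> ZP_R"
proof (induction n)
  case 0
  show ?case
    using subringE(3)[OF subring_ZP_R] by simp
next
  case (Suc n)
  moreover have "Y \<in> ZP_R"
    by (simp add: ZP_adj_def generate_ring.incl)
  ultimately show ?case
    using subringE(6)[OF subring_ZP_R] by (simp add: qt_pow_Suc_left[OF Y_carrier])
qed

lemma ZP_A_exponents: "ZP_A \<subseteq> qt_with_exponents m (\<lambda>c. 0 \<le> c 1)"
  unfolding ZP_adj_def
proof (rule generate_ring_subset_qt_with_exponents)
  show "ZP m 2 \<union> {X1, X2, qX (\<lambda>k. - ebasis 2 k)} \<subseteq> qt_with_exponents m (\<lambda>c. 0 \<le> c 1)"
    using two_le_m ZP_qt_with_exponents[of "\<lambda>c. 0 \<le> c 1" m]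
    by (auto simp: ebasis_def zvec_def intro!: qX_qt_with_exponents)
qed simp_all

text \<open>The lowest term of \<open>Y\<^sup>n\<close> has no \<open>X\<^sub>1\<close>, so it cannot cancel negative powers of \<open>X\<^sub>1\<close> in \<open>a\<close>.\<close>
lemma T0_mult_Y_pow_in_ZP_R:
  assumes a: "a \<in> T0"
    and aY: "qt_mult m L a (Y_pow n) \<in> qt_with_exponents m (\<lambda>c. 0 \<le> c 1)"
  shows "qt_mult m L a (Y_pow n) \<in> ZP_R"
proof -
  obtain i cY where low: "lowest_term m i Y cY 0" and cY: "cY 1 = 0"
    using Y_lowest_term_ex by blast
  obtain j where "lowest_term m i (Y_pow n) (\<lambda>k. int n * cY k) j"
    using lowest_term_pow[OF low] by blast
  moreover have "Y \<in> qt_with_exponents m (\<lambda>c. 0 \<le> c 1)"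
    using Y_exp_1_nonneg by (intro qt_with_exponents_mono[OF Y_exponents]) auto
  then have "Y_pow n \<in> qt_with_exponents m (\<lambda>c. 0 \<le> c 1)"
    by (rule qt_pow_qt_with_exponents[rotated 2]) simp_all
  ultimately have "a \<in> qt_with_exponents m (\<lambda>c. 0 \<le> c 1)"
    using nonneg_exponent_cancel_right[OF qt_with_exponentsD(1)[OF a] _ _ _ aY] cY by simp
  with a have "a \<in> ZP_R"
    by (intro nonneg_in_ZP_R) (fastforce simp: qt_with_exponents_def)
  then show ?thesis
    using subringE(6)[OF subring_ZP_R] Y_pow_in_ZP_R by simp
qed

lemma ZP_A_inter_ZP_B_subset_ZP_R: "ZP_A \<inter> ZP_B \<subseteq> ZP_R"
proof
  fix y assume y: "y \<in> ZP_A \<inter> ZP_B"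
  then have y1: "y \<in> qt_with_exponents m (\<lambda>c. 0 \<le> c 1)" and span: "y \<in> T0_span"
    using ZP_A_exponents ZP_B_subset_T0_span by blast+
  show "y \<in> ZP_R"
  proof (rule in_subring_by_parts[OF subring_ZP_R qt_with_exponentsD(1)[OF y1]])
    fix b :: int
    have part1: "qt_part (\<lambda>c. c 2) b y \<in> qt_with_exponents m (\<lambda>c. 0 \<le> c 1)"
      using y1 by (auto intro!: qt_with_exponentsI qt_part_carrier dest: qt_with_exponentsD split: if_splits)
    show "qt_part (\<lambda>c. c 2) b y \<in> ZP_R"
    proof (cases "0 \<le> b")
      case True
      have "qt_part (\<lambda>c. c 2) b y \<in> qt_with_exponents m (\<lambda>c. 0 \<le> c 1 \<and> 0 \<le> c 2)"
        using part1 True by (auto simp: qt_with_exponents_def split: if_splits)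
      then show ?thesis
        by (rule nonneg_in_ZP_R)
    next
      case False
      then have b: "b = - int (Suc (nat (- b - 1)))"
        by simp
      then obtain a where "a \<in> T0"
        and a: "qt_part (\<lambda>c. c 2) b y = qt_mult m L a (Y_pow (Suc (nat (- b - 1))))"
        using T0_span_negative_part[OF span] by metis
      then show ?thesis
        using T0_mult_Y_pow_in_ZP_R part1 by simp
    qed
  qed
qed

end

theorem lemma4p3:
  fixes m :: nat and L B :: "nat \<Rightarrow> nat \<Rightarrow> int" and d :: "nat \<Rightarrow> nat"
    and h :: "nat \<Rightarrow> nat \<Rightarrow> int \<Rightarrow> int"
  assumes "quantum_seed m 2 L B d h"
  shows "ZP_adj m 2 L {qX (ebasis 1), qX (ebasis 2), qX (\<lambda>k. - ebasis 2 k)}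
           \<inter> ZP_adj m 2 L {qX (ebasis 1), qX (\<lambda>k. - ebasis 1 k), qX (ebasis 2), mut_var m B d h 2}
         = ZP_adj m 2 L {qX (ebasis 1), qX (ebasis 2), mut_var m B d h 2}"
proof -
  interpret quantum_seed_rank2 m L B d h
    using assms by unfold_locales
  show ?thesis
    using ZP_A_inter_ZP_B_subset_ZP_R ZP_R_subset_ZP_A ZP_R_subset_ZP_B by blast
qed

end
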